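(* For $n\ge1$, the 2-group $\mathsf{Equiv}_{\mathbf{2Mat}_{\mathbb C}}(n)$ satisfies $\pi_0\cong S_n$, $\pi_1\cong(\mathbb C^* )^n$ with $S_n$ acting by $(\sigma\cdot\boldsymbol\lambda)_i=\lambda_{\sigma^{-1}(i)}$, its classifying class in $H^3(S_n,(\mathbb C^* )^n)$ is trivial, and it is equivalent to the split 2-group $\mathbb G(n)=S_n[0]\ltimes(\mathbb C^* )^n[1]$. An explicit equivalence of 2-groups $\mathbb E(n):\mathbb G(n)\to\mathsf{Equiv}_{\mathbf{2Mat}_{\mathbb C}}(n)$ is given by $\mathbb E(n)(\sigma)=(\mathbf P(\sigma),\mathbf I)$ on objects, by sending a morphism $(\sigma,\boldsymbol\lambda)$ to the 2-automorphism of $(\mathbf P(\sigma),\mathbf I)$ whose only nonempty entries are the $1\times1$ matrices $\lambda_{\sigma(j)}$ in position $(\sigma(j),j)$, $j=1,\dots,n$, and with structural isomorphisms $\mathbb E(n)_2(\sigma,\sigma')=1_{(\mathbf P(\sigma\sigma'),\mathbf I)}$.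
   Context: $\mathbf{2Mat}_{\mathbb C}$: objects integers $n\ge0$; for $n,m\ge1$ a 1-morphism $n\to m$ is $(\mathbf R,s)$ with $\mathbf R$ an $m\times n$ matrix over $\mathbb N$ and $s=(s_i)$ a gauge, $s_i(\mathbf a)\in GL((\mathbf R\mathbf a)_i,\mathbb C)$ for $\mathbf a\in\mathbb N^n$ (equal to $1$ if $(\mathbf R\mathbf a)_i=0$), normalized by $s_i(\mathbf e_j)=\mathbf I_{R_{ij}}$; a 2-morphism $(\mathbf R,s)\Rightarrow(\mathbf R',s')$ is an $m\times n$ array with $(i,j)$ entry an $R'_{ij}\times R_{ij}$ complex matrix if $R_{ij},R'_{ij}\ne0$, empty otherwise; vertical composition entrywise product; composition of 1-morphisms $(\tilde{\mathbf R},\tilde s)\circ(\mathbf R,s)=(\tilde{\mathbf R}\mathbf R,\tilde s\ast s)$ with $(\tilde s\ast s)_k(\mathbf a)=\tilde s_k(\mathbf R\mathbf a)\big(\bigoplus_{i}\mathbf I_{\tilde R_{ki}}\otimes s_i(\mathbf a)\big)\mathbf P(\tilde{\mathbf R}_k,\mathbf R,\mathbf a)\big(\bigoplus_j \tilde s_k(\mathbf R\mathbf e_j)^{-1}\otimes\mathbf I_{a_j}\big)$, $\mathbf P(\cdot)$ fixed permutation matrices of the construction which are identities when $\tilde{\mathbf R}_k$ or $\mathbf a$ is a standard basis vector, $\mathbf R$ is an identity or $\mathbf R$ has one column; horizontal composition $(\tilde{\mathsf T}\circ\mathsf T)_{kj}=\tilde s'_k(\mathbf R'\mathbf e_j)\big(\bigoplus_i\tilde{\mathsf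 T}_{ki}\otimes\mathsf T_{ij}\big)\tilde s_k(\mathbf R\mathbf e_j)^{-1}$; identity $(\mathbf I_n,\mathbf I)$, $\mathbf I$ the trivial gauge. $\mathsf{Equiv}_{\mathfrak C}(X)$ is the 2-group (monoidal groupoid, tensor = composition) of autoequivalences of $X$ and invertible 2-morphisms. $\mathbf P(\sigma)_{ij}=\delta_{i,\sigma(j)}$. The split 2-group $\mathbb G(n)$ has objects $S_n$, morphisms only automorphisms $(\sigma,\boldsymbol\lambda):\sigma\to\sigma$ with $\boldsymbol\lambda\in(\mathbb C^* )^n$, composition $(\sigma,\boldsymbol\lambda')\circ(\sigma,\boldsymbol\lambda)=(\sigma,\boldsymbol\lambda'\boldsymbol\lambda)$, tensor $\sigma\otimes\sigma'=\sigma\sigma'$, $(\sigma_1,\boldsymbol\lambda_1)\otimes(\sigma_2,\boldsymbol\lambda_2)=(\sigma_1\sigma_2,\boldsymbol\lambda_1(\sigma_1\cdot\boldsymbol\lambda_2))$, and identity associator and unit constraints. For a 2-group, $\pi_0$ is the group of isomorphism classes of objects, $\pi_1=\mathrm{Aut}(I)$ with $\pi_0$-action $[A]\cdot u=\gamma_A^{-1}\delta_A(u)$ ($\gamma_A(u)=l_A(u\otimes\mathrm{id}_A)l_A^{-1}$, $\delta_A(u)=r_A(\mathrm{id}_A\otimes u)r_A^{-1}$), and the classifying class is Sinh's invariant in $H^3(\pi_0,\pi_1)$. An equivalence of 2-groups is a monoidal functor whose underlying functor is an equivalence. *)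

theory Defs
  imports "Jordan_Normal_Form.Matrix" "HOL-Algebra.Sym_Groups"
begin

section \<open>Generic monoidal groupoids (2-groups)\<close>

record ('o, 'm) mgpd =
  tg_obj   :: "'o set"
  tg_hom   :: "'o \<Rightarrow> 'o \<Rightarrow> 'm set"
  tg_comp  :: "'m \<Rightarrow> 'm \<Rightarrow> 'm"          (* tg_comp g f = g after f *)
  tg_id    :: "'o \<Rightarrow> 'm"
  tg_tens  :: "'o \<Rightarrow> 'o \<Rightarrow> 'o"
  tg_tensm :: "'m \<Rightarrow> 'm \<Rightarrow> 'm"
  tg_unit  :: "'o"
  tg_assoc :: "'o \<Rightarrow> 'o \<Rightarrow> 'o \<Rightarrow> 'm"    (* (A*B)*C -> A*(B*C) *)
  tg_lu    :: "'o \<Rightarrow> 'm"                (* I*A -> A *)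
  tg_ru    :: "'o \<Rightarrow> 'm"                (* A*I -> A *)

definition invm :: "('o, 'm) mgpd \<Rightarrow> 'o \<Rightarrow> 'o \<Rightarrow> 'm \<Rightarrow> 'm" where
  "invm G A B f = (THE g. g \<in> tg_hom G B A \<and> tg_comp G g f = tg_id G A \<and> tg_comp G f g = tg_id G B)"

definition iso_mor :: "('o, 'm) mgpd \<Rightarrow> 'o \<Rightarrow> 'o \<Rightarrow> 'm \<Rightarrow> bool" where
  "iso_mor G A B f \<longleftrightarrow> f \<in> tg_hom G A B \<and>
     (\<exists>g \<in> tg_hom G B A. tg_comp G g f = tg_id G A \<and> tg_comp G f g = tg_id G B)"

definition iso_obj :: "('o, 'm) mgpd \<Rightarrow> 'o \<Rightarrow> 'o \<Rightarrow> bool" where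
  "iso_obj G A B \<longleftrightarrow> (\<exists>f. iso_mor G A B f)"

definition isorel :: "('o, 'm) mgpd \<Rightarrow> ('o \<times> 'o) set" where
  "isorel G = {(A, B). A \<in> tg_obj G \<and> B \<in> tg_obj G \<and> iso_obj G A B}"

definition isoclass :: "('o, 'm) mgpd \<Rightarrow> 'o \<Rightarrow> 'o set" where
  "isoclass G A = isorel G `` {A}"

definition pi0 :: "('o, 'm) mgpd \<Rightarrow> 'o set monoid" where
  "pi0 G = \<lparr> carrier = tg_obj G // isorel G,
             mult = (\<lambda>X Y. isoclass G (tg_tens G (SOME A. A \<in> X) (SOME B. B \<in> Y))),
             one = isoclass G (tg_unit G) \<rparr>"

definition pi1 :: "('o, 'm) mgpd \<Rightarrow> 'm monoid" where
  "pi1 G = \<lparr> carrier = tg_hom G (tg_unit G) (tg_unit G),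
             mult = tg_comp G, one = tg_id G (tg_unit G) \<rparr>"

definition gam :: "('o, 'm) mgpd \<Rightarrow> 'o \<Rightarrow> 'm \<Rightarrow> 'm" where
  "gam G A u = tg_comp G (tg_lu G A)
      (tg_comp G (tg_tensm G u (tg_id G A))
         (invm G (tg_tens G (tg_unit G) A) A (tg_lu G A)))"

definition del :: "('o, 'm) mgpd \<Rightarrow> 'o \<Rightarrow> 'm \<Rightarrow> 'm" where
  "del G A u = tg_comp G (tg_ru G A)
      (tg_comp G (tg_tensm G (tg_id G A) u)
         (invm G (tg_tens G A (tg_unit G)) A (tg_ru G A)))"

definition gam_inv :: "('o, 'm) mgpd \<Rightarrow> 'o \<Rightarrow> 'm \<Rightarrow> 'm" where
  "gam_inv G A v = (THE u. u \<in> tg_hom G (tg_unit G) (tg_unit G) \<and> gam G A u = v)"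

definition act :: "('o, 'm) mgpd \<Rightarrow> 'o \<Rightarrow> 'm \<Rightarrow> 'm" where
  "act G A u = gam_inv G A (del G A u)"

text \<open>Sinh's 3-cocycle attached to a choice of representatives rep and
  isomorphisms phi X Y : rep X * rep Y -> rep (XY).\<close>
definition sinh_cocycle ::
  "('o, 'm) mgpd \<Rightarrow> ('o set \<Rightarrow> 'o) \<Rightarrow> ('o set \<Rightarrow> 'o set \<Rightarrow> 'm) \<Rightarrow> 'o set \<Rightarrow> 'o set \<Rightarrow> 'o set \<Rightarrow> 'm" where
  "sinh_cocycle G rep phi X Y Z =
    (let P = pi0 G; XY = X \<otimes>\<^bsub>P\<^esub> Y; YZ = Y \<otimes>\<^bsub>P\<^esub> Z; XYZ = XY \<otimes>\<^bsub>P\<^esub> Z;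
         path1 = tg_comp G (phi XY Z) (tg_tensm G (phi X Y) (tg_id G (rep Z)));
         path2 = tg_comp G (phi X YZ)
                   (tg_comp G (tg_tensm G (tg_id G (rep X)) (phi Y Z))
                      (tg_assoc G (rep X) (rep Y) (rep Z)));
         src = tg_tens G (tg_tens G (rep X) (rep Y)) (rep Z)
     in gam_inv G (rep XYZ) (tg_comp G path1 (invm G src (rep (X \<otimes>\<^bsub>P\<^esub> YZ)) path2)))"

text \<open>The classifying (Sinh) class in H^3(pi_0, pi_1) is trivial: for every choice of
  representatives and structure isomorphisms the cocycle is a coboundary
  (group cohomology with the action above, written multiplicatively).\<close>
definition sinh_trivial :: "('o, 'm) mgpd \<Rightarrow> bool" where
  "sinh_trivial G \<longleftrightarrow>
    (\<forall>rep phi.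
      (\<forall>X \<in> carrier (pi0 G). rep X \<in> X) \<and>
      (\<forall>X \<in> carrier (pi0 G). \<forall>Y \<in> carrier (pi0 G).
          iso_mor G (tg_tens G (rep X) (rep Y)) (rep (X \<otimes>\<^bsub>pi0 G\<^esub> Y)) (phi X Y))
      \<longrightarrow>
      (\<exists>h. (\<forall>X \<in> carrier (pi0 G). \<forall>Y \<in> carrier (pi0 G). h X Y \<in> carrier (pi1 G)) \<and>
           (\<forall>X \<in> carrier (pi0 G). \<forall>Y \<in> carrier (pi0 G). \<forall>Z \<in> carrier (pi0 G).
              sinh_cocycle G rep phi X Y Z =
                act G (rep X) (h Y Z) \<otimes>\<^bsub>pi1 G\<^esub> inv\<^bsub>pi1 G\<^esub> (h (X \<otimes>\<^bsub>pi0 G\<^esub> Y) Z)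
                \<otimes>\<^bsub>pi1 G\<^esub> h X (Y \<otimes>\<^bsub>pi0 G\<^esub> Z) \<otimes>\<^bsub>pi1 G\<^esub> inv\<^bsub>pi1 G\<^esub> (h X Y))))"

definition mon_functor ::
  "('o, 'm) mgpd \<Rightarrow> ('p, 'n) mgpd \<Rightarrow> ('o \<Rightarrow> 'p) \<Rightarrow> ('m \<Rightarrow> 'n) \<Rightarrow> ('o \<Rightarrow> 'o \<Rightarrow> 'n) \<Rightarrow> 'n \<Rightarrow> bool" where
  "mon_functor G H F0 F1 F2 Fu \<longleftrightarrow>
    (\<forall>A \<in> tg_obj G. F0 A \<in> tg_obj H) \<and>
    (\<forall>A \<in> tg_obj G. \<forall>B \<in> tg_obj G. \<forall>f \<in> tg_hom G A B. F1 f \<in> tg_hom H (F0 A) (F0 B)) \<and>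
    (\<forall>A \<in> tg_obj G. \<forall>B \<in> tg_obj G. \<forall>C \<in> tg_obj G. \<forall>f \<in> tg_hom G A B. \<forall>g \<in> tg_hom G B C.
        F1 (tg_comp G g f) = tg_comp H (F1 g) (F1 f)) \<and>
    (\<forall>A \<in> tg_obj G. F1 (tg_id G A) = tg_id H (F0 A)) \<and>
    (\<forall>A \<in> tg_obj G. \<forall>B \<in> tg_obj G.
        iso_mor H (tg_tens H (F0 A) (F0 B)) (F0 (tg_tens G A B)) (F2 A B)) \<and>
    iso_mor H (tg_unit H) (F0 (tg_unit G)) Fu \<and>
    (\<forall>A \<in> tg_obj G. \<forall>A' \<in> tg_obj G. \<forall>B \<in> tg_obj G. \<forall>B' \<in> tg_obj G.
       \<forall>f \<in> tg_hom G A A'. \<forall>g \<in> tg_hom G B B'.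
        tg_comp H (F2 A' B') (tg_tensm H (F1 f) (F1 g)) = tg_comp H (F1 (tg_tensm G f g)) (F2 A B)) \<and>
    (\<forall>A \<in> tg_obj G. \<forall>B \<in> tg_obj G. \<forall>C \<in> tg_obj G.
        tg_comp H (F1 (tg_assoc G A B C))
          (tg_comp H (F2 (tg_tens G A B) C) (tg_tensm H (F2 A B) (tg_id H (F0 C))))
      = tg_comp H (F2 A (tg_tens G B C))
          (tg_comp H (tg_tensm H (tg_id H (F0 A)) (F2 B C)) (tg_assoc H (F0 A) (F0 B) (F0 C)))) \<and>
    (\<forall>A \<in> tg_obj G.
        tg_comp H (F1 (tg_lu G A)) (tg_comp H (F2 (tg_unit G) A) (tg_tensm H Fu (tg_id H (F0 A))))
      = tg_lu H (F0 A)) \<and>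
    (\<forall>A \<in> tg_obj G.
        tg_comp H (F1 (tg_ru G A)) (tg_comp H (F2 A (tg_unit G)) (tg_tensm H (tg_id H (F0 A)) Fu))
      = tg_ru H (F0 A))"

definition mon_equiv ::
  "('o, 'm) mgpd \<Rightarrow> ('p, 'n) mgpd \<Rightarrow> ('o \<Rightarrow> 'p) \<Rightarrow> ('m \<Rightarrow> 'n) \<Rightarrow> ('o \<Rightarrow> 'o \<Rightarrow> 'n) \<Rightarrow> 'n \<Rightarrow> bool" where
  "mon_equiv G H F0 F1 F2 Fu \<longleftrightarrow>
    mon_functor G H F0 F1 F2 Fu \<and>
    (\<forall>B \<in> tg_obj H. \<exists>A \<in> tg_obj G. iso_obj H (F0 A) B) \<and>
    (\<forall>A \<in> tg_obj G. \<forall>B \<in> tg_obj G. \<forall>g \<in> tg_hom H (F0 A) (F0 B). \<exists>f \<in> tg_hom G A B. F1 f = g) \<and>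
    (\<forall>A \<in> tg_obj G. \<forall>B \<in> tg_obj G. \<forall>f \<in> tg_hom G A B. \<forall>f' \<in> tg_hom G A B.
        F1 f = F1 f' \<longrightarrow> f = f')"

section \<open>The groups (C^*)^n and the split 2-group G(n)\<close>

text \<open>Indices run over {1..n}; vectors are extended by 1 outside.\<close>
definition cstar_vecs :: "nat \<Rightarrow> (nat \<Rightarrow> complex) set" where
  "cstar_vecs n = {l. (\<forall>i \<in> {1..n}. l i \<noteq> 0) \<and> (\<forall>i. i \<notin> {1..n} \<longrightarrow> l i = 1)}"

definition cstar_group :: "nat \<Rightarrow> (nat \<Rightarrow> complex) monoid" where
  "cstar_group n = \<lparr> carrier = cstar_vecs n, mult = (\<lambda>a b i. a i * b i), one = (\<lambda>i. 1) \<rparr>"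

definition perm_vec :: "(nat \<Rightarrow> nat) \<Rightarrow> (nat \<Rightarrow> complex) \<Rightarrow> (nat \<Rightarrow> complex)" where
  "perm_vec s l = (\<lambda>i. l (inv_into UNIV s i))"

definition Gsplit :: "nat \<Rightarrow> (nat \<Rightarrow> nat, (nat \<Rightarrow> nat) \<times> (nat \<Rightarrow> complex)) mgpd" where
  "Gsplit n = \<lparr>
     tg_obj = {s. s permutes {1..n}},
     tg_hom = (\<lambda>s t. if s = t then {(s, l) | l. l \<in> cstar_vecs n} else {}),
     tg_comp = (\<lambda>(s, l') (_, l). (s, \<lambda>i. l' i * l i)),
     tg_id = (\<lambda>s. (s, \<lambda>i. 1)),
     tg_tens = (\<lambda>s t. s \<circ> t),
     tg_tensm = (\<lambda>(s1, l1) (s2, l2). (s1 \<circ> s2, \<lambda>i. l1 i * perm_vec s1 l2 i)),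
     tg_unit = id,
     tg_assoc = (\<lambda>a b c. (a \<circ> b \<circ> c, \<lambda>i. 1)),
     tg_lu = (\<lambda>a. (a, \<lambda>i. 1)),
     tg_ru = (\<lambda>a. (a, \<lambda>i. 1)) \<rparr>"

section \<open>Gauged matrices: the endo-hom 2-category of n in 2Mat_C\<close>

text \<open>Index range {1..n}; N-matrices and N-vectors are 0 outside the range.\<close>
definition natvec :: "nat \<Rightarrow> (nat \<Rightarrow> nat) \<Rightarrow> bool" where
  "natvec n a \<longleftrightarrow> (\<forall>i. i \<notin> {1..n} \<longrightarrow> a i = 0)"

definition natmat :: "nat \<Rightarrow> (nat \<Rightarrow> nat \<Rightarrow> nat) \<Rightarrow> bool" where
  "natmat n R \<longleftrightarrow> (\<forall>i j. i \<notin> {1..n} \<or> j \<notin> {1..n} \<longrightarrow> R i j = 0)"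

definition evec :: "nat \<Rightarrow> nat \<Rightarrow> nat" where
  "evec j = (\<lambda>i. if i = j then 1 else 0)"

definition mvec :: "nat \<Rightarrow> (nat \<Rightarrow> nat \<Rightarrow> nat) \<Rightarrow> (nat \<Rightarrow> nat) \<Rightarrow> nat \<Rightarrow> nat" where
  "mvec n R a = (\<lambda>i. if i \<in> {1..n} then \<Sum>j\<in>{1..n}. R i j * a j else 0)"

definition mmul :: "nat \<Rightarrow> (nat \<Rightarrow> nat \<Rightarrow> nat) \<Rightarrow> (nat \<Rightarrow> nat \<Rightarrow> nat) \<Rightarrow> (nat \<Rightarrow> nat \<Rightarrow> nat)" where
  "mmul n R S = (\<lambda>i j. if i \<in> {1..n} \<and> j \<in> {1..n} then \<Sum>k\<in>{1..n}. R i k * S k j else 0)"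

definition idmat :: "nat \<Rightarrow> (nat \<Rightarrow> nat \<Rightarrow> nat)" where
  "idmat n = (\<lambda>i j. if i = j \<and> i \<in> {1..n} then 1 else 0)"

definition Pmat :: "nat \<Rightarrow> (nat \<Rightarrow> nat) \<Rightarrow> (nat \<Rightarrow> nat \<Rightarrow> nat)" where
  "Pmat n s = (\<lambda>i j. if i \<in> {1..n} \<and> j \<in> {1..n} \<and> i = s j then 1 else 0)"

type_synonym gauge = "nat \<Rightarrow> (nat \<Rightarrow> nat) \<Rightarrow> complex mat"
type_synonym onemor = "(nat \<Rightarrow> nat \<Rightarrow> nat) \<times> gauge"
type_synonym twocell = "nat \<Rightarrow> nat \<Rightarrow> complex mat"

definition is_gauge :: "nat \<Rightarrow> (nat \<Rightarrow> nat \<Rightarrow> nat) \<Rightarrow> gauge \<Rightarrow> bool" where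
  "is_gauge n R s \<longleftrightarrow>
    (\<forall>i \<in> {1..n}. \<forall>a. natvec n a \<longrightarrow>
        s i a \<in> carrier_mat (mvec n R a i) (mvec n R a i) \<and> invertible_mat (s i a)) \<and>
    (\<forall>i \<in> {1..n}. \<forall>j \<in> {1..n}. s i (evec j) = 1\<^sub>m (R i j)) \<and>
    (\<forall>i a. i \<notin> {1..n} \<or> \<not> natvec n a \<longrightarrow> s i a = 1\<^sub>m 0)"

definition is_onemor :: "nat \<Rightarrow> onemor \<Rightarrow> bool" where
  "is_onemor n A \<longleftrightarrow> natmat n (fst A) \<and> is_gauge n (fst A) (snd A)"

definition triv_gauge :: "nat \<Rightarrow> (nat \<Rightarrow> nat \<Rightarrow> nat) \<Rightarrow> gauge" where
  "triv_gauge n R = (\<lambda>i a. if i \<in> {1..n} \<and> natvec n a then 1\<^sub>m (mvec n R a i) else 1\<^sub>m 0)"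

definition id1 :: "nat \<Rightarrow> onemor" where
  "id1 n = (idmat n, triv_gauge n (idmat n))"

definition mat_inv :: "complex mat \<Rightarrow> complex mat" where
  "mat_inv A = (SOME B. inverts_mat A B \<and> inverts_mat B A)"

definition kron :: "complex mat \<Rightarrow> complex mat \<Rightarrow> complex mat" where
  "kron A B = mat (dim_row A * dim_row B) (dim_col A * dim_col B)
     (\<lambda>(i, j). A $$ (i div dim_row B, j div dim_col B) * B $$ (i mod dim_row B, j mod dim_col B))"

definition dsum :: "nat \<Rightarrow> (nat \<Rightarrow> complex mat) \<Rightarrow> complex mat" where
  "dsum n f = diag_block_mat (map f [1..<Suc n])"

text \<open>The permutation matrices P(row, R, a) of the construction are not specified in
  the source beyond the listed properties; they are a parameter Pm subject to them.\<close>
definition is_perm_mat :: "nat \<Rightarrow> complex mat \<Rightarrow> bool" where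
  "is_perm_mat N M \<longleftrightarrow> (\<exists>p. p permutes {0..<N} \<and> M = mat N N (\<lambda>(i, j). if i = p j then 1 else 0))"

definition admissible_P :: "nat \<Rightarrow> ((nat \<Rightarrow> nat) \<Rightarrow> (nat \<Rightarrow> nat \<Rightarrow> nat) \<Rightarrow> (nat \<Rightarrow> nat) \<Rightarrow> complex mat) \<Rightarrow> bool" where
  "admissible_P n Pm \<longleftrightarrow>
    (\<forall>r R a. natvec n r \<and> natmat n R \<and> natvec n a \<longrightarrow>
       is_perm_mat (\<Sum>i\<in>{1..n}. r i * mvec n R a i) (Pm r R a) \<and>
       ((\<exists>i \<in> {1..n}. r = evec i) \<or> (\<exists>j \<in> {1..n}. a = evec j) \<or> R = idmat n \<or> n = 1
          \<longrightarrow> Pm r R a = 1\<^sub>m (\<Sum>i\<in>{1..n}. r i * mvec n R a i)))"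

definition comp1 :: "nat \<Rightarrow> ((nat \<Rightarrow> nat) \<Rightarrow> (nat \<Rightarrow> nat \<Rightarrow> nat) \<Rightarrow> (nat \<Rightarrow> nat) \<Rightarrow> complex mat)
     \<Rightarrow> onemor \<Rightarrow> onemor \<Rightarrow> onemor" where
  "comp1 n Pm At A =
    (let Rt = fst At; st = snd At; R = fst A; s = snd A in
     (mmul n Rt R,
      \<lambda>k a. if k \<in> {1..n} \<and> natvec n a then
               st k (mvec n R a)
             * dsum n (\<lambda>i. kron (1\<^sub>m (Rt k i)) (s i a))
             * Pm (Rt k) R a
             * dsum n (\<lambda>j. kron (mat_inv (st k (mvec n R (evec j)))) (1\<^sub>m (a j)))
           else 1\<^sub>m 0))"

text \<open>2-morphisms (R,s) => (R',s'): arrays whose (i,j) entry is an R'_ij x R_ij matrix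
  (empty when R_ij = 0 or R'_ij = 0), and the 0x0 matrix outside the index range.\<close>
definition is_twocell :: "nat \<Rightarrow> (nat \<Rightarrow> nat \<Rightarrow> nat) \<Rightarrow> (nat \<Rightarrow> nat \<Rightarrow> nat) \<Rightarrow> twocell \<Rightarrow> bool" where
  "is_twocell n R R' T \<longleftrightarrow>
    (\<forall>i \<in> {1..n}. \<forall>j \<in> {1..n}. T i j \<in> carrier_mat (R' i j) (R i j)) \<and>
    (\<forall>i j. i \<notin> {1..n} \<or> j \<notin> {1..n} \<longrightarrow> T i j = 1\<^sub>m 0)"

definition vcomp2 :: "twocell \<Rightarrow> twocell \<Rightarrow> twocell" where
  "vcomp2 T' T = (\<lambda>i j. T' i j * T i j)"

definition id2 :: "nat \<Rightarrow> (nat \<Rightarrow> nat \<Rightarrow> nat) \<Rightarrow> twocell" where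
  "id2 n R = (\<lambda>i j. if i \<in> {1..n} \<and> j \<in> {1..n} then 1\<^sub>m (R i j) else 1\<^sub>m 0)"

definition hcomp2 :: "nat \<Rightarrow> onemor \<Rightarrow> onemor \<Rightarrow> twocell \<Rightarrow> onemor \<Rightarrow> onemor \<Rightarrow> twocell \<Rightarrow> twocell" where
  "hcomp2 n At At' Tt A A' T =
    (\<lambda>k j. if k \<in> {1..n} \<and> j \<in> {1..n} then
       snd At' k (mvec n (fst A') (evec j))
       * dsum n (\<lambda>i. kron (Tt k i) (T i j))
       * mat_inv (snd At k (mvec n (fst A) (evec j)))
     else 1\<^sub>m 0)"

definition inv_twocell :: "nat \<Rightarrow> onemor \<Rightarrow> onemor \<Rightarrow> twocell \<Rightarrow> bool" where
  "inv_twocell n A B T \<longleftrightarrow> is_twocell n (fst A) (fst B) T \<and>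
     (\<exists>T'. is_twocell n (fst B) (fst A) T' \<and>
           vcomp2 T' T = id2 n (fst A) \<and> vcomp2 T T' = id2 n (fst B))"

definition is_autoequiv :: "nat \<Rightarrow> ((nat \<Rightarrow> nat) \<Rightarrow> (nat \<Rightarrow> nat \<Rightarrow> nat) \<Rightarrow> (nat \<Rightarrow> nat) \<Rightarrow> complex mat)
     \<Rightarrow> onemor \<Rightarrow> bool" where
  "is_autoequiv n Pm A \<longleftrightarrow> is_onemor n A \<and>
     (\<exists>B. is_onemor n B \<and>
          (\<exists>T. inv_twocell n (comp1 n Pm B A) (id1 n) T) \<and>
          (\<exists>T. inv_twocell n (comp1 n Pm A B) (id1 n) T))"

text \<open>The 2-group Equiv(n): morphisms are triples (source, 2-cell, target);
  2Mat_C is a (strict) 2-category, so associator and unitors are identities.\<close>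
definition EquivMat :: "nat \<Rightarrow> ((nat \<Rightarrow> nat) \<Rightarrow> (nat \<Rightarrow> nat \<Rightarrow> nat) \<Rightarrow> (nat \<Rightarrow> nat) \<Rightarrow> complex mat)
     \<Rightarrow> (onemor, onemor \<times> twocell \<times> onemor) mgpd" where
  "EquivMat n Pm = \<lparr>
     tg_obj = {A. is_autoequiv n Pm A},
     tg_hom = (\<lambda>A B. {(A, T, B) | T. inv_twocell n A B T}),
     tg_comp = (\<lambda>(B, T', C) (A, T, B'). (A, vcomp2 T' T, C)),
     tg_id = (\<lambda>A. (A, id2 n (fst A), A)),
     tg_tens = comp1 n Pm,
     tg_tensm = (\<lambda>(At, Tt, At') (A, T, A'). (comp1 n Pm At A, hcomp2 n At At' Tt A A' T, comp1 n Pm At' A')),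
     tg_unit = id1 n,
     tg_assoc = (\<lambda>A B C. (comp1 n Pm (comp1 n Pm A B) C, id2 n (fst (comp1 n Pm (comp1 n Pm A B) C)),
                            comp1 n Pm A (comp1 n Pm B C))),
     tg_lu = (\<lambda>A. (comp1 n Pm (id1 n) A, id2 n (fst A), A)),
     tg_ru = (\<lambda>A. (comp1 n Pm A (id1 n), id2 n (fst A), A)) \<rparr>"

section \<open>The explicit equivalence E(n) : G(n) -> Equiv(n)\<close>

definition E0 :: "nat \<Rightarrow> (nat \<Rightarrow> nat) \<Rightarrow> onemor" where
  "E0 n s = (Pmat n s, triv_gauge n (Pmat n s))"

definition E1 :: "nat \<Rightarrow> (nat \<Rightarrow> nat) \<times> (nat \<Rightarrow> complex) \<Rightarrow> onemor \<times> twocell \<times> onemor" where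
  "E1 n m = (let s = fst m; l = snd m in
     (E0 n s,
      \<lambda>i j. if i \<in> {1..n} \<and> j \<in> {1..n} \<and> i = s j then mat 1 1 (\<lambda>_. l (s j)) else 1\<^sub>m (Pmat n s i j),
      E0 n s))"

definition E2 :: "nat \<Rightarrow> (nat \<Rightarrow> nat) \<Rightarrow> (nat \<Rightarrow> nat) \<Rightarrow> onemor \<times> twocell \<times> onemor" where
  "E2 n s t = (E0 n (s \<circ> t), id2 n (Pmat n (s \<circ> t)), E0 n (s \<circ> t))"

definition Eu :: "nat \<Rightarrow> onemor \<times> twocell \<times> onemor" where
  "Eu n = (id1 n, id2 n (idmat n), id1 n)"

end

(*
  Every autoequivalence of n has an N-matrix with an N-matrix inverse, hence a permutation
  matrix P(s), and P(s) determines it up to isomorphism. An invertible 2-cell between two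
  1-morphisms over P(s) is an array of nonzero scalars sitting at the positions (s j, j);
  because gauges are identities on basis vectors, vertical and horizontal composition of
  such cells are exactly the operations of the split 2-group G(n). Admissibility of the
  permutation matrices of the construction makes the composite of the trivially gauged
  P(s) and P(t) the trivially gauged P(s t), so E(n) is a strict monoidal functor, and it
  is an equivalence by the two previous facts. The same computations identify pi_0 with
  S_n and pi_1 with the nonzero scalar vectors, acted on by permuting coordinates. Writing
  the structure isomorphisms of a Sinh cocycle as scalar cells with coefficients c, the
  cocycle becomes c(XY,Z) c(X,Y) / (c(X,YZ) (X.c(Y,Z))), the coboundary of 1/c.
*)
theory Submission
  imports Defs
begin

declare atLeastAtMost_iff[simp del] One_nat_def[simp del]

section \<open>Small matrices\<close>

lemma carrier_mat_0_0_eq: "A \<in> carrier_mat 0 0 \<Longrightarrow> A = 1\<^sub>m 0"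
  by (rule eq_matI) auto

lemma carrier_mat_1_1_eq: "A \<in> carrier_mat 1 1 \<Longrightarrow> A = mat 1 1 (\<lambda>_. A $$ (0, 0))"
  by (rule eq_matI) auto

lemma one_mat_1_eq: "1\<^sub>m 1 = mat 1 1 (\<lambda>_. 1)"
  by (rule eq_matI) auto

lemma mat_1_1_mult: "mat 1 1 (\<lambda>_. a) * mat 1 1 (\<lambda>_. b) = mat 1 1 (\<lambda>_. a * b :: complex)"
  by (rule eq_matI) (auto simp: scalar_prod_def)

lemma mat_1_1_eq_iff: "mat 1 1 (\<lambda>_. a) = mat 1 1 (\<lambda>_. b) \<longleftrightarrow> a = b"
proof
  assume "mat 1 1 (\<lambda>_. a) = mat 1 1 (\<lambda>_. b)"
  then have "mat 1 1 (\<lambda>_. a) $$ (0, 0) = mat 1 1 (\<lambda>_. b) $$ (0, 0)" by simp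
  then show "a = b" by simp
qed simp

lemma kron_one_0_left: "kron (1\<^sub>m 0) A = 1\<^sub>m 0"
  unfolding kron_def by (rule eq_matI) auto

lemma kron_one_0_right: "kron A (1\<^sub>m 0) = 1\<^sub>m 0"
  unfolding kron_def by (rule eq_matI) auto

lemma kron_one_1_left: "kron (1\<^sub>m 1) A = A"
  unfolding kron_def by (rule eq_matI) auto

lemma kron_mat_1_1: "kron (mat 1 1 (\<lambda>_. a)) (mat 1 1 (\<lambda>_. b)) = mat 1 1 (\<lambda>_. a * b)"
  unfolding kron_def by (rule eq_matI) auto

lemma inverts_mat_carrier:
  assumes "A \<in> carrier_mat p p" "inverts_mat A B" "inverts_mat B A"
  shows "B \<in> carrier_mat p p"
proof -
  have "A * B = 1\<^sub>m p" "B * A = 1\<^sub>m (dim_row B)"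
    using assms unfolding inverts_mat_def by auto
  from arg_cong[OF this(1), of dim_col] arg_cong[OF this(2), of dim_col] assms(1)
  show ?thesis by auto
qed

lemma mat_inv_one: "mat_inv (1\<^sub>m p) = (1\<^sub>m p :: complex mat)"
proof -
  have "\<exists>B. inverts_mat (1\<^sub>m p) B \<and> inverts_mat B (1\<^sub>m p :: complex mat)"
    by (rule exI[of _ "1\<^sub>m p"]) (simp add: inverts_mat_def)
  then have inv: "inverts_mat (1\<^sub>m p) (mat_inv (1\<^sub>m p)) \<and> inverts_mat (mat_inv (1\<^sub>m p)) (1\<^sub>m p :: complex mat)"
    unfolding mat_inv_def by (rule someI_ex)
  with inverts_mat_carrier[of "1\<^sub>m p" p] have "mat_inv (1\<^sub>m p) \<in> carrier_mat p p"
    by auto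
  with inv show ?thesis unfolding inverts_mat_def by auto
qed

lemma invertible_mat_one: "invertible_mat (1\<^sub>m p :: complex mat)"
  unfolding invertible_mat_def inverts_mat_def by (auto intro!: exI[of _ "1\<^sub>m p"])

lemma invertible_matE:
  assumes "invertible_mat A" "A \<in> carrier_mat p p"
  obtains B where "B \<in> carrier_mat p p" "A * B = 1\<^sub>m p" "B * A = (1\<^sub>m p :: complex mat)"
proof -
  obtain B where "inverts_mat A B" "inverts_mat B A"
    using assms unfolding invertible_mat_def by auto
  moreover have "B \<in> carrier_mat p p"
    using inverts_mat_carrier assms calculation by blast
  ultimately show ?thesis using that assms unfolding inverts_mat_def by auto
qed

lemma invertible_mat_mult:
  assumes A: "invertible_mat A" "A \<in> carrier_mat p p" and B: "invertible_mat B" "B \<in> carrier_mat p p"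
  shows "invertible_mat (A * B :: complex mat)"
proof -
  obtain A' where A': "A' \<in> carrier_mat p p" "A * A' = 1\<^sub>m p" "A' * A = 1\<^sub>m p"
    using invertible_matE A by blast
  obtain B' where B': "B' \<in> carrier_mat p p" "B * B' = 1\<^sub>m p" "B' * B = 1\<^sub>m p"
    using invertible_matE B by blast
  have "A * B * (B' * A') = A * (B * B' * A')"
    using A B A' B'
    by (simp add: assoc_mult_mat[of A p p B p "B' * A'" p] assoc_mult_mat[of B p p B' p A' p, symmetric])
  then have right: "A * B * (B' * A') = 1\<^sub>m p"
    using A A' B' by simp
  have "B' * A' * (A * B) = B' * (A' * A * B)"
    using A B A' B'
    by (simp add: assoc_mult_mat[of B' p p A' p "A * B" p] assoc_mult_mat[of A' p p A p B p, symmetric])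
  then have left: "B' * A' * (A * B) = 1\<^sub>m p"
    using B A' B' by simp
  show ?thesis
    unfolding invertible_mat_def inverts_mat_def
    using right left A B A' B' by (auto intro!: exI[of _ "B' * A'"])
qed

text \<open>The rank argument, done by hand: with one side at most 1 only a few entries of
  \<open>B A\<close> and \<open>A B\<close> have to be inspected.\<close>
lemma inverse_mats_dim_eq:
  fixes A B :: "complex mat"
  assumes A: "A \<in> carrier_mat a b" and B: "B \<in> carrier_mat b a"
    and BA: "B * A = 1\<^sub>m b" and AB: "A * B = 1\<^sub>m a" and a1: "a \<le> 1"
  shows "a = b"
proof (rule ccontr)
  assume ne: "a \<noteq> b"
  consider "a = 0" "0 < b" | "a = 1" "b = 0" | "a = 1" "2 \<le> b"
    using ne a1 by linarith
  then show False
  proof cases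
    case 1
    have "(B * A) $$ (0, 0) = 0"
      using A B 1 by (simp add: scalar_prod_def)
    with BA 1 show False by simp
  next
    case 2
    have "(A * B) $$ (0, 0) = 0"
      using A B 2 by (simp add: scalar_prod_def)
    with AB 2 show False by simp
  next
    case 3
    have e: "(B * A) $$ (i, j) = B $$ (i, 0) * A $$ (0, j)" if "i < b" "j < b" for i j
      using A B 3 that by (simp add: scalar_prod_def One_nat_def)
    have "B $$ (1, 0) * A $$ (0, 1) = 1" "B $$ (0, 0) * A $$ (0, 1) = 0" "B $$ (0, 0) * A $$ (0, 0) = 1"
      using e[of 1 1] e[of 0 1] e[of 0 0] BA 3 by auto
    then show False by (metis mult_zero_left mult_zero_right zero_neq_one mult_eq_0_iff)
  qed
qed

lemma diag_block_mat_Cons_0: "diag_block_mat (1\<^sub>m 0 # As) = diag_block_mat (As :: complex mat list)"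
  by (rule eq_matI) (auto simp: Let_def)

lemma diag_block_mat_Cons_zeros:
  assumes "\<forall>A \<in> set As. A = 1\<^sub>m 0"
  shows "diag_block_mat (B # As) = (B :: complex mat)"
proof -
  have "diag_block_mat As = 1\<^sub>m 0"
    using assms by (induct As) (auto simp: diag_block_mat_Cons_0 intro: eq_matI)
  then show ?thesis by (auto simp: Let_def intro!: eq_matI)
qed

lemma diag_block_mat_single:
  "\<forall>x \<in> set xs. f x = 1\<^sub>m 0 \<Longrightarrow> \<forall>x \<in> set ys. f x = 1\<^sub>m 0 \<Longrightarrow>
   diag_block_mat (map f (xs @ z # ys)) = (f z :: complex mat)"
  by (induct xs)
    (simp_all del: diag_block_mat.simps add: diag_block_mat_Cons_0 diag_block_mat_Cons_zeros)

lemma dsum_cong: "(\<And>i. i \<in> {1..n} \<Longrightarrow> f i = g i) \<Longrightarrow> dsum n f = dsum n g"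
  unfolding dsum_def
  by (rule arg_cong[where f = diag_block_mat], rule map_cong) (auto simp: atLeastAtMost_iff)

lemma dsum_single:
  assumes "z \<in> {1..n}" "\<And>i. i \<in> {1..n} \<Longrightarrow> i \<noteq> z \<Longrightarrow> f i = 1\<^sub>m 0"
  shows "dsum n f = f z"
proof -
  have "[1..<Suc n] = [1..<z] @ [z..<z + (Suc n - z)]"
    using assms(1) upt_add_eq_append[of 1 z "Suc n - z"] by (auto simp: atLeastAtMost_iff)
  also have "[z..<z + (Suc n - z)] = z # [Suc z..<Suc n]"
    using assms(1) by (simp add: atLeastAtMost_iff upt_conv_Cons)
  finally have split: "[1..<Suc n] = [1..<z] @ z # [Suc z..<Suc n]" .
  show ?thesis
    unfolding dsum_def split
    by (rule diag_block_mat_single) (use assms in \<open>auto simp: atLeastAtMost_iff\<close>)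
qed

section \<open>Permutation matrices\<close>

text \<open>Plain \<open>inv\<close> is taken by the group-inverse syntax of HOL-Algebra.\<close>
abbreviation pinv :: "(nat \<Rightarrow> nat) \<Rightarrow> nat \<Rightarrow> nat" where
  "pinv s \<equiv> inv_into UNIV s"

lemma permutes_eq_iff_pinv: "s permutes S \<Longrightarrow> i = s j \<longleftrightarrow> pinv s i = j"
  using permutes_inv_eq[of s S i j] by auto

lemma pinv_comp: "s permutes S \<Longrightarrow> t permutes S \<Longrightarrow> pinv (s \<circ> t) = pinv t \<circ> pinv s"
  by (simp add: o_inv_distrib permutes_bij)

lemma Pmat_row: "s permutes {1..n} \<Longrightarrow> k \<in> {1..n} \<Longrightarrow> Pmat n s k = evec (pinv s k)"
  unfolding Pmat_def evec_def
  by (auto simp: fun_eq_iff permutes_inv_eq permutes_in_image[OF permutes_inv])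

lemma mvec_Pmat:
  assumes s: "s permutes {1..n}"
  shows "mvec n (Pmat n s) a = (\<lambda>i. if i \<in> {1..n} then a (pinv s i) else 0)"
proof
  fix i
  show "mvec n (Pmat n s) a i = (if i \<in> {1..n} then a (pinv s i) else 0)"
  proof (cases "i \<in> {1..n}")
    case True
    have "(\<Sum>j\<in>{1..n}. Pmat n s i j * a j) = (\<Sum>j\<in>{1..n}. if j = pinv s i then a j else 0)"
      by (rule sum.cong) (auto simp: Pmat_def permutes_eq_iff_pinv[OF s] True)
    also have "\<dots> = a (pinv s i)"
      using True permutes_in_image[OF permutes_inv[OF s]] by simp
    finally show ?thesis unfolding mvec_def using True by simp
  qed (simp add: mvec_def)
qed

lemma mvec_evec: "i \<in> {1..n} \<Longrightarrow> j \<in> {1..n} \<Longrightarrow> mvec n R (evec j) i = R i j"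
  unfolding mvec_def evec_def by (simp add: if_distrib cong: if_cong)

lemma mvec_Pmat_evec: "s permutes {1..n} \<Longrightarrow> j \<in> {1..n} \<Longrightarrow> mvec n (Pmat n s) (evec j) = evec (s j)"
  by (auto simp: mvec_Pmat evec_def fun_eq_iff permutes_inv_eq permutes_in_image)

lemma mmul_Pmat:
  assumes s: "s permutes {1..n}" and t: "t permutes {1..n}"
  shows "mmul n (Pmat n s) (Pmat n t) = Pmat n (s \<circ> t)"
proof (intro ext)
  fix i j
  show "mmul n (Pmat n s) (Pmat n t) i j = Pmat n (s \<circ> t) i j"
  proof (cases "i \<in> {1..n} \<and> j \<in> {1..n}")
    case True
    have "(\<Sum>k\<in>{1..n}. Pmat n s i k * Pmat n t k j) = (\<Sum>k\<in>{1..n}. if k = t j then Pmat n s i k else 0)"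
      by (rule sum.cong) (use True in \<open>auto simp: Pmat_def\<close>)
    also have "\<dots> = Pmat n s i (t j)"
      using True permutes_in_image[OF t] by simp
    finally show ?thesis
      using True permutes_in_image[OF t] unfolding mmul_def by (simp add: Pmat_def)
  qed (auto simp: mmul_def Pmat_def)
qed

lemma Pmat_id: "Pmat n id = idmat n"
  unfolding Pmat_def idmat_def by (auto simp: fun_eq_iff)

lemma Pmat_inject:
  assumes s: "s permutes {1..n}" and t: "t permutes {1..n}"
  shows "Pmat n s = Pmat n t \<longleftrightarrow> s = t"
proof
  assume eq: "Pmat n s = Pmat n t"
  show "s = t"
  proof
    fix j
    show "s j = t j"
    proof (cases "j \<in> {1..n}")
      case True
      then have "Pmat n s (s j) j = 1"
        using permutes_in_image[OF s] by (simp add: Pmat_def)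
      then have "Pmat n t (s j) j = 1"
        using eq by simp
      then show ?thesis by (simp add: Pmat_def split: if_splits)
    qed (simp add: permutes_not_in[OF s] permutes_not_in[OF t])
  qed
qed simp

lemma natmat_Pmat: "natmat n (Pmat n s)"
  unfolding natmat_def Pmat_def by auto

lemma natvec_evec: "j \<in> {1..n} \<Longrightarrow> natvec n (evec j)"
  unfolding natvec_def evec_def by auto

lemma natvec_mvec: "natvec n (mvec n R a)"
  unfolding natvec_def mvec_def by auto

lemma natvec_Pmat_row: "natvec n (Pmat n s k)"
  unfolding natvec_def Pmat_def by auto

text \<open>Every entry of \<open>R S = I\<close> and \<open>S R = I\<close> is a sum of natural numbers, so each column of R
  holds exactly one nonzero entry, and it is 1.\<close>
lemma natmat_inverse_columns:
  assumes RS: "\<And>i j. i \<in> {1..n} \<Longrightarrow> j \<in> {1..n} \<Longrightarrow> mmul n R S i j = idmat n i j"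
    and SR: "\<And>i j. i \<in> {1..n} \<Longrightarrow> j \<in> {1..n} \<Longrightarrow> mmul n S R i j = idmat n i j"
  obtains f where "f ` {1..n} \<subseteq> {1..n}" "inj_on f {1..n}"
    "\<And>i j. i \<in> {1..n} \<Longrightarrow> j \<in> {1..n} \<Longrightarrow> R i j = (if i = f j then 1 else 0)"
proof -
  let ?r = "{1..n}"
  have sumRS: "(\<Sum>m\<in>?r. R i m * S m j) = idmat n i j" if "i \<in> ?r" "j \<in> ?r" for i j
    using RS[OF that] that unfolding mmul_def by simp
  have sumSR: "(\<Sum>m\<in>?r. S i m * R m j) = idmat n i j" if "i \<in> ?r" "j \<in> ?r" for i j
    using SR[OF that] that unfolding mmul_def by simp
  have le_sum: "f m \<le> (\<Sum>m\<in>?r. f m)" if "m \<in> ?r" for f :: "nat \<Rightarrow> nat" and m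
    using that by (intro member_le_sum) auto
  have "\<forall>j \<in> ?r. \<exists>k. k \<in> ?r \<and> S j k \<noteq> 0 \<and> R k j \<noteq> 0"
  proof (rule ballI, rule ccontr)
    fix j assume j: "j \<in> ?r" and "\<not> (\<exists>k. k \<in> ?r \<and> S j k \<noteq> 0 \<and> R k j \<noteq> 0)"
    then have "(\<Sum>m\<in>?r. S j m * R m j) = 0" by (auto intro!: sum.neutral)
    with sumSR[OF j j] j show False by (simp add: idmat_def)
  qed
  then have "\<exists>f. \<forall>j \<in> ?r. f j \<in> ?r \<and> S j (f j) \<noteq> 0 \<and> R (f j) j \<noteq> 0"
    by (rule bchoice)
  then obtain f where "\<forall>j \<in> ?r. f j \<in> ?r \<and> S j (f j) \<noteq> 0 \<and> R (f j) j \<noteq> 0"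
    by blast
  then have f: "\<And>j. j \<in> ?r \<Longrightarrow> f j \<in> ?r \<and> S j (f j) \<noteq> 0 \<and> R (f j) j \<noteq> 0"
    by blast
  have R_off: "i = f j" if i: "i \<in> ?r" and j: "j \<in> ?r" and nz: "R i j \<noteq> 0" for i j
  proof -
    have "1 \<le> R i j * S j (f j)" using nz f[OF j] by (simp add: One_nat_def Suc_le_eq)
    also have "\<dots> \<le> (\<Sum>m\<in>?r. R i m * S m (f j))" using le_sum[OF j] .
    also have "\<dots> = idmat n i (f j)" using sumRS i f[OF j] by simp
    finally show ?thesis by (simp add: idmat_def split: if_splits)
  qed
  have R_on: "R (f j) j = 1" if j: "j \<in> ?r" for j
  proof -
    have "R (f j) j \<le> R (f j) j * S j (f j)" using f[OF j] by simp
    also have "\<dots> \<le> (\<Sum>m\<in>?r. R (f j) m * S m (f j))" using le_sum[OF j] .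
    also have "\<dots> = 1" using sumRS f[OF j] by (simp add: idmat_def)
    finally show ?thesis using f[OF j] by simp
  qed
  have inj: "inj_on f ?r"
  proof (rule inj_onI)
    fix j j' assume j: "j \<in> ?r" and j': "j' \<in> ?r" and eq: "f j = f j'"
    have "1 \<le> S j (f j) * R (f j) j'" using f[OF j] f[OF j'] eq by (simp add: One_nat_def Suc_le_eq)
    also have "\<dots> \<le> (\<Sum>m\<in>?r. S j m * R m j')" using le_sum[of "f j" "\<lambda>m. S j m * R m j'"] f[OF j] by blast
    also have "\<dots> = idmat n j j'" using sumSR j j' by simp
    finally show "j = j'" by (simp add: idmat_def split: if_splits)
  qed
  have R_eq: "R i j = (if i = f j then 1 else 0)" if "i \<in> ?r" "j \<in> ?r" for i j
  proof (cases "i = f j")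
    case True
    then show ?thesis using R_on[OF that(2)] by simp
  next
    case False
    then show ?thesis using R_off[OF that] by auto
  qed
  have "f ` ?r \<subseteq> ?r"
    using f by auto
  from that[OF this inj R_eq] show ?thesis .
qed

lemma natmat_inverse_Pmat:
  assumes R: "natmat n R"
    and RS: "\<And>i j. i \<in> {1..n} \<Longrightarrow> j \<in> {1..n} \<Longrightarrow> mmul n R S i j = idmat n i j"
    and SR: "\<And>i j. i \<in> {1..n} \<Longrightarrow> j \<in> {1..n} \<Longrightarrow> mmul n S R i j = idmat n i j"
  obtains s where "s permutes {1..n}" "R = Pmat n s"
proof -
  obtain f where f: "f ` {1..n} \<subseteq> {1..n}" "inj_on f {1..n}"
    and R_eq: "\<And>i j. i \<in> {1..n} \<Longrightarrow> j \<in> {1..n} \<Longrightarrow> R i j = (if i = f j then 1 else 0)"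
    using natmat_inverse_columns[OF RS SR] by blast
  define s where "s j = (if j \<in> {1..n} then f j else j)" for j
  have "bij_betw f {1..n} {1..n}"
    unfolding bij_betw_def using endo_inj_surj[OF finite_atLeastAtMost f] f(2) by blast
  then have "bij_betw s {1..n} {1..n}"
    by (rule bij_betw_cong[THEN iffD1, rotated]) (simp add: s_def)
  then have s: "s permutes {1..n}"
    by (rule bij_imp_permutes) (simp add: s_def)
  have "R i j = Pmat n s i j" for i j
  proof (cases "i \<in> {1..n} \<and> j \<in> {1..n}")
    case True
    then show ?thesis by (simp add: R_eq Pmat_def s_def)
  next
    case False
    then show ?thesis using R unfolding natmat_def Pmat_def by auto
  qed
  with s that show ?thesis by blast
qed

section \<open>Gauges and composition of 1-morphisms\<close>

lemma triv_gauge_Pmat: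
  "s permutes {1..n} \<Longrightarrow> k \<in> {1..n} \<Longrightarrow> natvec n a \<Longrightarrow> triv_gauge n (Pmat n s) k a = 1\<^sub>m (a (pinv s k))"
  by (simp add: triv_gauge_def mvec_Pmat)

lemma is_gauge_triv_gauge: "is_gauge n R (triv_gauge n R)"
  unfolding is_gauge_def triv_gauge_def
  by (auto simp: invertible_mat_one mvec_evec natvec_evec)

lemma is_gauge_evec: "is_gauge n R g \<Longrightarrow> i \<in> {1..n} \<Longrightarrow> j \<in> {1..n} \<Longrightarrow> g i (evec j) = 1\<^sub>m (R i j)"
  unfolding is_gauge_def by blast

lemma is_gauge_carrier: "is_gauge n R g \<Longrightarrow> i \<in> {1..n} \<Longrightarrow> natvec n a \<Longrightarrow>
   g i a \<in> carrier_mat (mvec n R a i) (mvec n R a i) \<and> invertible_mat (g i a)"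
  unfolding is_gauge_def by blast

lemma is_onemor_E0: "is_onemor n (E0 n s)"
  unfolding is_onemor_def E0_def by (simp add: natmat_Pmat is_gauge_triv_gauge)

lemma fst_E0 [simp]: "fst (E0 n s) = Pmat n s"
  unfolding E0_def by simp

lemma id1_eq_E0_id: "id1 n = E0 n id"
  unfolding id1_def E0_def Pmat_id by simp

lemma fst_comp1 [simp]: "fst (comp1 n Pm A' A) = mmul n (fst A') (fst A)"
  by (simp add: comp1_def Let_def)

lemma snd_comp1_out: "\<not> (k \<in> {1..n} \<and> natvec n a) \<Longrightarrow> snd (comp1 n Pm At A) k a = 1\<^sub>m 0"
  unfolding comp1_def Let_def by auto

lemma dsum_kron_evec_left:
  assumes z: "z \<in> {1..n}"
  shows "dsum n (\<lambda>i. kron (1\<^sub>m (evec z i)) (B i)) = B z"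
proof -
  have "dsum n (\<lambda>i. kron (1\<^sub>m (evec z i)) (B i)) = kron (1\<^sub>m (evec z z)) (B z)"
    by (rule dsum_single[OF z]) (simp add: evec_def kron_one_0_left)
  also have "\<dots> = B z"
    by (simp add: evec_def kron_one_1_left)
  finally show ?thesis .
qed

lemma dsum_kron_evec_right:
  assumes z: "z \<in> {1..n}"
  shows "dsum n (\<lambda>j. kron (mat_inv (1\<^sub>m (evec z j))) (1\<^sub>m (a j))) = 1\<^sub>m (a z)"
proof -
  have "dsum n (\<lambda>j. kron (mat_inv (1\<^sub>m (evec z j))) (1\<^sub>m (a j)))
      = kron (mat_inv (1\<^sub>m (evec z z))) (1\<^sub>m (a z))"
    by (rule dsum_single[OF z]) (simp add: evec_def mat_inv_one kron_one_0_left)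
  also have "\<dots> = 1\<^sub>m (a z)"
    by (simp add: evec_def mat_inv_one kron_one_1_left)
  finally show ?thesis .
qed

text \<open>Row k of P(s) is a standard basis vector, so both direct sums in the composite gauge
  collapse to a single block, and admissibility makes the permutation factor an identity.\<close>
lemma snd_comp1_Pmat:
  assumes s: "s permutes {1..n}" and t: "t permutes {1..n}"
    and g': "is_gauge n (Pmat n s) g'" and g: "is_gauge n (Pmat n t) g"
    and adm: "admissible_P n Pm" and k: "k \<in> {1..n}" and a: "natvec n a"
  shows "snd (comp1 n Pm (Pmat n s, g') (Pmat n t, g)) k a = g' k (mvec n (Pmat n t) a) * g (pinv s k) a"
proof -
  define z where "z = pinv s k"
  define N where "N = a (pinv t z)"
  have z: "z \<in> {1..n}" and tz: "pinv t z \<in> {1..n}"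
    unfolding z_def using k by (simp_all add: permutes_in_image[OF permutes_inv] s t)
  have row: "Pmat n s k = evec z" by (simp add: Pmat_row[OF s k] z_def)
  have dim: "mvec n (Pmat n t) a z = N"
    using z unfolding N_def by (simp add: mvec_Pmat t)
  have dim_k: "mvec n (Pmat n s) (mvec n (Pmat n t) a) k = N"
    using k z by (simp add: mvec_Pmat s t N_def z_def)
  then have g'_carrier: "g' k (mvec n (Pmat n t) a) \<in> carrier_mat N N"
    using is_gauge_carrier[OF g' k natvec_mvec[of n "Pmat n t" a]] by simp
  have g_carrier: "g z a \<in> carrier_mat N N"
    using is_gauge_carrier[OF g z a] dim by simp
  have left_sum: "dsum n (\<lambda>i. kron (1\<^sub>m (Pmat n s k i)) (g i a)) = g z a"
    unfolding row by (rule dsum_kron_evec_left[OF z])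
  have perm: "Pm (Pmat n s k) (Pmat n t) a = 1\<^sub>m N"
  proof -
    have "Pm (Pmat n s k) (Pmat n t) a = 1\<^sub>m (\<Sum>i\<in>{1..n}. Pmat n s k i * mvec n (Pmat n t) a i)"
      using adm[unfolded admissible_P_def, rule_format, of "Pmat n s k" "Pmat n t" a]
        natmat_Pmat natvec_Pmat_row a z row by blast
    also have "(\<Sum>i\<in>{1..n}. Pmat n s k i * mvec n (Pmat n t) a i) = N"
      using dim_k k unfolding mvec_def[of n "Pmat n s"] by simp
    finally show ?thesis .
  qed
  have unit: "g' k (mvec n (Pmat n t) (evec j)) = 1\<^sub>m (evec (pinv t z) j)" if j: "j \<in> {1..n}" for j
  proof -
    have "g' k (mvec n (Pmat n t) (evec j)) = 1\<^sub>m (evec z (t j))"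
      using is_gauge_evec[OF g' k] j row mvec_Pmat_evec[OF t j] permutes_in_image[OF t] by simp
    also have "evec z (t j) = evec (pinv t z) j"
      using permutes_inv_eq[OF t, of z j] by (auto simp: evec_def)
    finally show ?thesis .
  qed
  have right_sum: "dsum n (\<lambda>j. kron (mat_inv (g' k (mvec n (Pmat n t) (evec j)))) (1\<^sub>m (a j))) = 1\<^sub>m N"
  proof -
    have "dsum n (\<lambda>j. kron (mat_inv (g' k (mvec n (Pmat n t) (evec j)))) (1\<^sub>m (a j)))
        = dsum n (\<lambda>j. kron (mat_inv (1\<^sub>m (evec (pinv t z) j))) (1\<^sub>m (a j)))"
      by (rule dsum_cong) (simp add: unit)
    also have "\<dots> = 1\<^sub>m N"
      unfolding N_def by (rule dsum_kron_evec_right[OF tz])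
    finally show ?thesis .
  qed
  have "snd (comp1 n Pm (Pmat n s, g') (Pmat n t, g)) k a
      = g' k (mvec n (Pmat n t) a) * g z a * 1\<^sub>m N * 1\<^sub>m N"
    using k a left_sum perm right_sum by (simp add: comp1_def Let_def)
  also have "\<dots> = g' k (mvec n (Pmat n t) a) * g z a"
    using g'_carrier g_carrier by simp
  finally show ?thesis unfolding z_def .
qed

lemma comp1_E0:
  assumes s: "s permutes {1..n}" and t: "t permutes {1..n}" and adm: "admissible_P n Pm"
  shows "comp1 n Pm (E0 n s) (E0 n t) = E0 n (s \<circ> t)"
proof -
  have st: "s \<circ> t permutes {1..n}" by (rule permutes_compose[OF t s])
  have "snd (comp1 n Pm (E0 n s) (E0 n t)) k a = triv_gauge n (Pmat n (s \<circ> t)) k a" for k a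
  proof (cases "k \<in> {1..n} \<and> natvec n a")
    case True
    then have k: "k \<in> {1..n}" and a: "natvec n a" and z: "pinv s k \<in> {1..n}"
      by (auto simp: permutes_in_image[OF permutes_inv[OF s]])
    have "mvec n (Pmat n t) a (pinv s k) = a (pinv t (pinv s k))"
      using z by (simp add: mvec_Pmat t)
    then show ?thesis
      using snd_comp1_Pmat[OF s t is_gauge_triv_gauge is_gauge_triv_gauge adm k a]
      by (simp add: E0_def triv_gauge_Pmat s t st k a z natvec_mvec pinv_comp[OF s t])
  qed (auto simp: snd_comp1_out triv_gauge_def)
  then show ?thesis
    by (simp add: E0_def mmul_Pmat s t prod_eq_iff fun_eq_iff)
qed

lemma is_gauge_comp1_Pmat:
  assumes s: "s permutes {1..n}" and t: "t permutes {1..n}"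
    and g': "is_gauge n (Pmat n s) g'" and g: "is_gauge n (Pmat n t) g" and adm: "admissible_P n Pm"
  shows "is_gauge n (Pmat n (s \<circ> t)) (snd (comp1 n Pm (Pmat n s, g') (Pmat n t, g)))"
  unfolding is_gauge_def
proof (intro conjI ballI allI impI)
  fix k a assume k: "k \<in> {1..n}" and a: "natvec n a"
  have z: "pinv s k \<in> {1..n}" using k permutes_in_image[OF permutes_inv[OF s]] by simp
  have dim: "mvec n (Pmat n (s \<circ> t)) a k = a (pinv t (pinv s k))"
    using k by (simp add: mvec_Pmat permutes_compose[OF t s] pinv_comp[OF s t])
  have "mvec n (Pmat n s) (mvec n (Pmat n t) a) k = a (pinv t (pinv s k))"
       "mvec n (Pmat n t) a (pinv s k) = a (pinv t (pinv s k))"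
    using k z by (simp_all add: mvec_Pmat s t)
  then have "g' k (mvec n (Pmat n t) a) \<in> carrier_mat (a (pinv t (pinv s k))) (a (pinv t (pinv s k)))"
      "invertible_mat (g' k (mvec n (Pmat n t) a))"
      "g (pinv s k) a \<in> carrier_mat (a (pinv t (pinv s k))) (a (pinv t (pinv s k)))"
      "invertible_mat (g (pinv s k) a)"
    using is_gauge_carrier[OF g' k natvec_mvec[of n "Pmat n t" a]] is_gauge_carrier[OF g z a] by auto
  then show "snd (comp1 n Pm (Pmat n s, g') (Pmat n t, g)) k a
      \<in> carrier_mat (mvec n (Pmat n (s \<circ> t)) a k) (mvec n (Pmat n (s \<circ> t)) a k)"
      "invertible_mat (snd (comp1 n Pm (Pmat n s, g') (Pmat n t, g)) k a)"
    using snd_comp1_Pmat[OF s t g' g adm k a] dim by (simp_all add: invertible_mat_mult)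
next
  fix k j assume k: "k \<in> {1..n}" and j: "j \<in> {1..n}"
  have tj: "t j \<in> {1..n}" and z: "pinv s k \<in> {1..n}"
    using j k by (simp_all add: permutes_in_image t permutes_inv[OF s])
  have "Pmat n s k (t j) = Pmat n (s \<circ> t) k j" "Pmat n t (pinv s k) j = Pmat n (s \<circ> t) k j"
    using k j tj z permutes_inv_eq[OF s, of k "t j"] by (auto simp: Pmat_def)
  then show "snd (comp1 n Pm (Pmat n s, g') (Pmat n t, g)) k (evec j) = 1\<^sub>m (Pmat n (s \<circ> t) k j)"
    using snd_comp1_Pmat[OF s t g' g adm k natvec_evec[OF j]] is_gauge_evec[OF g' k tj]
      is_gauge_evec[OF g z j] mvec_Pmat_evec[OF t j] by simp
qed (auto simp: snd_comp1_out)

lemma comp1_onemor: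
  assumes s: "s permutes {1..n}" and t: "t permutes {1..n}" and adm: "admissible_P n Pm"
    and A': "is_onemor n A'" "fst A' = Pmat n s" and A: "is_onemor n A" "fst A = Pmat n t"
  shows "is_onemor n (comp1 n Pm A' A)" "fst (comp1 n Pm A' A) = Pmat n (s \<circ> t)"
proof -
  show fst: "fst (comp1 n Pm A' A) = Pmat n (s \<circ> t)"
    using A' A by (simp add: mmul_Pmat s t)
  obtain g' g where A'_eq: "A' = (Pmat n s, g')" and A_eq: "A = (Pmat n t, g)"
    using A'(2) A(2) by (cases A', cases A) auto
  moreover have "is_gauge n (Pmat n s) g'" "is_gauge n (Pmat n t) g"
    using A'(1) A(1) unfolding A'_eq A_eq is_onemor_def by simp_all
  ultimately have "is_gauge n (Pmat n (s \<circ> t)) (snd (comp1 n Pm A' A))"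
    using is_gauge_comp1_Pmat[OF s t _ _ adm] by simp
  then show "is_onemor n (comp1 n Pm A' A)"
    unfolding is_onemor_def using fst natmat_Pmat by simp
qed

section \<open>Scalar 2-cells between permutation matrices\<close>

text \<open>A 2-cell between 1-morphisms with underlying matrix P(s) has a 1x1 block at each
  position (s j, j) and empty blocks elsewhere; \<open>perm_cell n s c\<close> puts the scalar \<open>c i\<close>
  in row i, and \<open>perm_cell_coeffs\<close> reads the scalars back (extended by 1 off {1..n}).\<close>
definition perm_cell :: "nat \<Rightarrow> (nat \<Rightarrow> nat) \<Rightarrow> (nat \<Rightarrow> complex) \<Rightarrow> twocell" where
  "perm_cell n s c = (\<lambda>i j. if i \<in> {1..n} \<and> j \<in> {1..n} \<and> i = s j then mat 1 1 (\<lambda>_. c i) else 1\<^sub>m 0)"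

definition perm_cell_coeffs :: "nat \<Rightarrow> (nat \<Rightarrow> nat) \<Rightarrow> twocell \<Rightarrow> nat \<Rightarrow> complex" where
  "perm_cell_coeffs n s T = (\<lambda>i. if i \<in> {1..n} then T i (pinv s i) $$ (0, 0) else 1)"

lemma cstar_vecs_nonzero: "c \<in> cstar_vecs n \<Longrightarrow> i \<in> {1..n} \<Longrightarrow> c i \<noteq> 0"
  unfolding cstar_vecs_def by auto

lemma cstar_vecs_eqI:
  assumes "c \<in> cstar_vecs n" "d \<in> cstar_vecs n" "\<And>i. i \<in> {1..n} \<Longrightarrow> c i = d i"
  shows "c = d"
proof
  fix i
  show "c i = d i"
    using assms unfolding cstar_vecs_def by (cases "i \<in> {1..n}") auto
qed

lemma cstar_vecs_mult: "c \<in> cstar_vecs n \<Longrightarrow> d \<in> cstar_vecs n \<Longrightarrow> (\<lambda>i. c i * d i) \<in> cstar_vecs n"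
  unfolding cstar_vecs_def by auto

lemma cstar_vecs_inverse: "c \<in> cstar_vecs n \<Longrightarrow> (\<lambda>i. 1 / c i) \<in> cstar_vecs n"
  unfolding cstar_vecs_def by auto

lemma perm_vec_cstar_vecs: "s permutes {1..n} \<Longrightarrow> c \<in> cstar_vecs n \<Longrightarrow> perm_vec s c \<in> cstar_vecs n"
  unfolding perm_vec_def cstar_vecs_def using permutes_in_image[OF permutes_inv, of s "{1..n}"] by auto

lemma E1_eq_perm_cell: "E1 n (s, l) = (E0 n s, perm_cell n s l, E0 n s)"
  unfolding E1_def perm_cell_def Pmat_def by (auto simp: fun_eq_iff Let_def)

lemma id2_Pmat: "id2 n (Pmat n s) = perm_cell n s (\<lambda>_. 1)"
  unfolding id2_def perm_cell_def Pmat_def by (auto simp: fun_eq_iff one_mat_1_eq)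

lemma vcomp2_perm_cell: "vcomp2 (perm_cell n s a) (perm_cell n s b) = perm_cell n s (\<lambda>i. a i * b i)"
  unfolding vcomp2_def perm_cell_def by (auto simp: fun_eq_iff mat_1_1_mult)

lemma perm_cell_cong: "(\<And>i. i \<in> {1..n} \<Longrightarrow> a i = b i) \<Longrightarrow> perm_cell n s a = perm_cell n s b"
  unfolding perm_cell_def by (auto simp: fun_eq_iff)

lemma perm_cell_eq_iff:
  assumes s: "s permutes {1..n}"
  shows "perm_cell n s a = perm_cell n s b \<longleftrightarrow> (\<forall>i \<in> {1..n}. a i = b i)"
proof
  assume eq: "perm_cell n s a = perm_cell n s b"
  show "\<forall>i \<in> {1..n}. a i = b i"
  proof
    fix i assume i: "i \<in> {1..n}"
    have "perm_cell n s a i (pinv s i) = perm_cell n s b i (pinv s i)"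
      using eq by simp
    then have "mat 1 1 (\<lambda>_. a i) = mat 1 1 (\<lambda>_. b i)"
      using i permutes_in_image[OF permutes_inv[OF s]]
      by (simp add: perm_cell_def permutes_inverses[OF s])
    then show "a i = b i" by (simp add: mat_1_1_eq_iff)
  qed
qed (auto intro: perm_cell_cong)

lemma perm_cell_coeffs_perm_cell:
  "s permutes {1..n} \<Longrightarrow> c \<in> cstar_vecs n \<Longrightarrow> perm_cell_coeffs n s (perm_cell n s c) = c"
  unfolding perm_cell_coeffs_def perm_cell_def cstar_vecs_def
  by (auto simp: fun_eq_iff permutes_in_image[OF permutes_inv] permutes_inverses)

lemma is_twocell_perm_cell: "is_twocell n (Pmat n s) (Pmat n s) (perm_cell n s c)"
  unfolding is_twocell_def perm_cell_def Pmat_def by auto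

lemma twocell_eq_perm_cell:
  assumes s: "s permutes {1..n}" and T: "is_twocell n (Pmat n s) (Pmat n s) T"
  shows "T = perm_cell n s (perm_cell_coeffs n s T)"
proof (intro ext)
  fix i j
  show "T i j = perm_cell n s (perm_cell_coeffs n s T) i j"
  proof (cases "i \<in> {1..n} \<and> j \<in> {1..n}")
    case True
    then have c: "T i j \<in> carrier_mat (Pmat n s i j) (Pmat n s i j)"
      using T unfolding is_twocell_def by auto
    show ?thesis
    proof (cases "i = s j")
      case on: True
      with True c have "T i j = mat 1 1 (\<lambda>_. T i j $$ (0, 0))"
        by (simp add: Pmat_def carrier_mat_1_1_eq)
      moreover have "pinv s i = j"
        using on permutes_eq_iff_pinv[OF s] by simp
      ultimately show ?thesis
        using True on unfolding perm_cell_def perm_cell_coeffs_def by simp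
    next
      case False
      then show ?thesis
        using c carrier_mat_0_0_eq unfolding perm_cell_def by (simp add: Pmat_def)
    qed
  next
    case False
    then show ?thesis
      using T unfolding is_twocell_def perm_cell_def by auto
  qed
qed

lemma inv_twocell_perm_cell:
  assumes s: "s permutes {1..n}" and X: "fst X = Pmat n s" and Y: "fst Y = Pmat n s"
    and T: "inv_twocell n X Y T"
  shows "T = perm_cell n s (perm_cell_coeffs n s T)" "perm_cell_coeffs n s T \<in> cstar_vecs n"
proof -
  show T_eq: "T = perm_cell n s (perm_cell_coeffs n s T)"
    using T X Y twocell_eq_perm_cell[OF s] unfolding inv_twocell_def by simp
  obtain T' where T': "is_twocell n (Pmat n s) (Pmat n s) T'" "vcomp2 T' T = id2 n (Pmat n s)"
    using T X Y unfolding inv_twocell_def by auto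
  have "perm_cell n s (\<lambda>i. perm_cell_coeffs n s T' i * perm_cell_coeffs n s T i) = perm_cell n s (\<lambda>_. 1)"
    using T'(2) T_eq twocell_eq_perm_cell[OF s T'(1)] by (metis id2_Pmat vcomp2_perm_cell)
  then have "\<forall>i \<in> {1..n}. perm_cell_coeffs n s T i \<noteq> 0"
    by (auto simp: perm_cell_eq_iff[OF s])
  then show "perm_cell_coeffs n s T \<in> cstar_vecs n"
    unfolding cstar_vecs_def perm_cell_coeffs_def by auto
qed

lemma inv_twocell_perm_cellI:
  assumes X: "fst X = Pmat n s" and Y: "fst Y = Pmat n s" and c: "\<And>i. i \<in> {1..n} \<Longrightarrow> c i \<noteq> 0"
  shows "inv_twocell n X Y (perm_cell n s c)"
proof -
  have "vcomp2 (perm_cell n s (\<lambda>i. 1 / c i)) (perm_cell n s c) = id2 n (Pmat n s)"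
       "vcomp2 (perm_cell n s c) (perm_cell n s (\<lambda>i. 1 / c i)) = id2 n (Pmat n s)"
    unfolding vcomp2_perm_cell id2_Pmat by (auto intro: perm_cell_cong simp: c)
  then show ?thesis
    unfolding inv_twocell_def X Y using is_twocell_perm_cell by blast
qed

lemma inv_twocell_entry_eq:
  assumes T: "inv_twocell n X Y T" and i: "i \<in> {1..n}" and j: "j \<in> {1..n}" and le: "fst Y i j \<le> 1"
  shows "fst Y i j = fst X i j"
proof -
  obtain T' where T': "is_twocell n (fst Y) (fst X) T'"
    "vcomp2 T' T = id2 n (fst X)" "vcomp2 T T' = id2 n (fst Y)"
    using T unfolding inv_twocell_def by auto
  have "T i j \<in> carrier_mat (fst Y i j) (fst X i j)" "T' i j \<in> carrier_mat (fst X i j) (fst Y i j)"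
    using T T'(1) i j unfolding inv_twocell_def is_twocell_def by auto
  moreover have "T' i j * T i j = 1\<^sub>m (fst X i j)" "T i j * T' i j = 1\<^sub>m (fst Y i j)"
    using fun_cong[OF fun_cong[OF T'(2), of i], of j] fun_cong[OF fun_cong[OF T'(3), of i], of j] i j
    unfolding vcomp2_def id2_def by simp_all
  ultimately show ?thesis
    using inverse_mats_dim_eq le by blast
qed

lemma inv_twocell_Pmat_eq:
  assumes s: "s permutes {1..n}" and t: "t permutes {1..n}"
    and X: "fst X = Pmat n s" and Y: "fst Y = Pmat n t" and T: "inv_twocell n X Y T"
  shows "s = t"
proof -
  have "Pmat n t i j = Pmat n s i j" for i j
    using inv_twocell_entry_eq[OF T, of i j] X Y by (cases "i \<in> {1..n} \<and> j \<in> {1..n}") (auto simp: Pmat_def)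
  then show ?thesis
    using Pmat_inject[OF s t] by (auto simp: fun_eq_iff)
qed

text \<open>The gauges drop out of horizontal composition because their values on basis
  vectors are identities; what remains is the multiplication of the split 2-group.\<close>
lemma hcomp2_perm_cell:
  assumes s: "s permutes {1..n}" and t: "t permutes {1..n}"
    and gAt: "is_gauge n (Pmat n s) (snd At)" and gAt': "is_gauge n (Pmat n s) (snd At')"
    and A: "fst A = Pmat n t" and A': "fst A' = Pmat n t"
  shows "hcomp2 n At At' (perm_cell n s a) A A' (perm_cell n t b)
       = perm_cell n (s \<circ> t) (\<lambda>k. a k * b (pinv s k))"
proof (intro ext)
  fix k j
  show "hcomp2 n At At' (perm_cell n s a) A A' (perm_cell n t b) k j
      = perm_cell n (s \<circ> t) (\<lambda>k. a k * b (pinv s k)) k j"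
  proof (cases "k \<in> {1..n} \<and> j \<in> {1..n}")
    case True
    then have k: "k \<in> {1..n}" and j: "j \<in> {1..n}" and tj: "t j \<in> {1..n}"
      using permutes_in_image[OF t] by auto
    have gauges: "snd At' k (mvec n (fst A') (evec j)) = 1\<^sub>m (Pmat n s k (t j))"
      "snd At k (mvec n (fst A) (evec j)) = 1\<^sub>m (Pmat n s k (t j))"
      using A A' mvec_Pmat_evec[OF t j] is_gauge_evec[OF gAt' k tj] is_gauge_evec[OF gAt k tj] by simp_all
    have sum: "dsum n (\<lambda>i. kron (perm_cell n s a k i) (perm_cell n t b i j))
        = kron (perm_cell n s a k (t j)) (mat 1 1 (\<lambda>_. b (t j)))"
      using dsum_single[OF tj, of "\<lambda>i. kron (perm_cell n s a k i) (perm_cell n t b i j)"] j tj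
      by (auto simp: perm_cell_def kron_one_0_right)
    have hcomp: "hcomp2 n At At' (perm_cell n s a) A A' (perm_cell n t b) k j
        = 1\<^sub>m (Pmat n s k (t j)) * kron (perm_cell n s a k (t j)) (mat 1 1 (\<lambda>_. b (t j)))
          * mat_inv (1\<^sub>m (Pmat n s k (t j)))"
      using k j by (simp add: hcomp2_def gauges sum)
    show ?thesis
    proof (cases "k = s (t j)")
      case True
      then have "pinv s k = t j" "Pmat n s k (t j) = 1" "perm_cell n s a k (t j) = mat 1 1 (\<lambda>_. a k)"
        using permutes_eq_iff_pinv[OF s] k tj by (simp_all add: Pmat_def perm_cell_def)
      with True k j show ?thesis
        unfolding hcomp by (simp add: perm_cell_def kron_mat_1_1 mat_inv_one)
    next
      case False
      then have "Pmat n s k (t j) = 0" "perm_cell n s a k (t j) = 1\<^sub>m 0"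
        by (simp_all add: Pmat_def perm_cell_def)
      with False show ?thesis
        unfolding hcomp by (simp add: perm_cell_def kron_one_0_left mat_inv_one)
    qed
  qed (auto simp: hcomp2_def perm_cell_def)
qed

section \<open>The 2-group of autoequivalences\<close>

locale equiv_mat =
  fixes n :: nat
    and Pm :: "(nat \<Rightarrow> nat) \<Rightarrow> (nat \<Rightarrow> nat \<Rightarrow> nat) \<Rightarrow> (nat \<Rightarrow> nat) \<Rightarrow> complex mat"
begin

abbreviation EM :: "(onemor, onemor \<times> twocell \<times> onemor) mgpd" where
  "EM \<equiv> EquivMat n Pm"

lemma EM_obj: "tg_obj EM = {A. is_autoequiv n Pm A}"
  and EM_hom: "tg_hom EM A B = {(A, T, B) | T. inv_twocell n A B T}"
  and EM_comp: "tg_comp EM (B, T', C) (A, T, B') = (A, vcomp2 T' T, C)"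
  and EM_id: "tg_id EM A = (A, id2 n (fst A), A)"
  and EM_tens: "tg_tens EM A B = comp1 n Pm A B"
  and EM_tensm: "tg_tensm EM (At, Tt, At') (A, T, A') = (comp1 n Pm At A, hcomp2 n At At' Tt A A' T, comp1 n Pm At' A')"
  and EM_unit: "tg_unit EM = id1 n"
  and EM_assoc: "tg_assoc EM A B C = (comp1 n Pm (comp1 n Pm A B) C,
      id2 n (fst (comp1 n Pm (comp1 n Pm A B) C)), comp1 n Pm A (comp1 n Pm B C))"
  and EM_lu: "tg_lu EM A = (comp1 n Pm (id1 n) A, id2 n (fst A), A)"
  and EM_ru: "tg_ru EM A = (comp1 n Pm A (id1 n), id2 n (fst A), A)"
  by (simp_all add: EquivMat_def)

text \<open>An invertible 2-cell to the identity forces \<open>R S = I\<close> entrywise, since the entries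
  of the identity are at most 1; conversely \<open>(P(s\<^sup>-\<^sup>1), I)\<close> is an inverse up to the identity 2-cell.\<close>
lemma obj_EM_iff: "A \<in> tg_obj EM \<longleftrightarrow> is_onemor n A \<and> (\<exists>s. s permutes {1..n} \<and> fst A = Pmat n s)"
proof
  assume "A \<in> tg_obj EM"
  then obtain B T1 T2 where A: "is_onemor n A"
    and T1: "inv_twocell n (comp1 n Pm B A) (id1 n) T1" and T2: "inv_twocell n (comp1 n Pm A B) (id1 n) T2"
    unfolding EM_obj is_autoequiv_def by blast
  have idmat_le: "fst (id1 n) i j \<le> 1" for i j
    by (simp add: id1_def idmat_def)
  have AB: "mmul n (fst A) (fst B) i j = idmat n i j" and BA: "mmul n (fst B) (fst A) i j = idmat n i j"
    if "i \<in> {1..n}" "j \<in> {1..n}" for i j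
    using inv_twocell_entry_eq[OF T2 that idmat_le] inv_twocell_entry_eq[OF T1 that idmat_le]
    by (simp_all add: id1_def)
  have "natmat n (fst A)"
    using A unfolding is_onemor_def by blast
  then obtain s where "s permutes {1..n}" "fst A = Pmat n s"
    using natmat_inverse_Pmat[OF _ AB BA] by blast
  with A show "is_onemor n A \<and> (\<exists>s. s permutes {1..n} \<and> fst A = Pmat n s)" by blast
next
  assume "is_onemor n A \<and> (\<exists>s. s permutes {1..n} \<and> fst A = Pmat n s)"
  then obtain s where A: "is_onemor n A" and s: "s permutes {1..n}" and fA: "fst A = Pmat n s"
    by blast
  have s': "pinv s permutes {1..n}"
    using permutes_inv[OF s] .
  have "fst (comp1 n Pm (E0 n (pinv s)) A) = Pmat n id" "fst (comp1 n Pm A (E0 n (pinv s))) = Pmat n id"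
    "fst (id1 n) = Pmat n id"
    using fA by (simp_all add: mmul_Pmat[OF s' s] mmul_Pmat[OF s s'] permutes_inv_o[OF s] id1_eq_E0_id)
  then have "inv_twocell n (comp1 n Pm (E0 n (pinv s)) A) (id1 n) (perm_cell n id (\<lambda>_. 1))"
    "inv_twocell n (comp1 n Pm A (E0 n (pinv s))) (id1 n) (perm_cell n id (\<lambda>_. 1))"
    by (simp_all add: inv_twocell_perm_cellI)
  with A show "A \<in> tg_obj EM"
    unfolding EM_obj is_autoequiv_def using is_onemor_E0 by blast
qed

lemma obj_EME:
  assumes "A \<in> tg_obj EM"
  obtains s where "s permutes {1..n}" "fst A = Pmat n s" "is_gauge n (Pmat n s) (snd A)"
  using assms unfolding obj_EM_iff is_onemor_def by auto

lemma gauge_of_obj: "A \<in> tg_obj EM \<Longrightarrow> fst A = Pmat n s \<Longrightarrow> is_gauge n (Pmat n s) (snd A)"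
  unfolding obj_EM_iff is_onemor_def by auto

lemma E0_in_obj: "s permutes {1..n} \<Longrightarrow> E0 n s \<in> tg_obj EM"
  unfolding obj_EM_iff using is_onemor_E0 by auto

lemma perm_cell_in_hom:
  "fst X = Pmat n s \<Longrightarrow> fst Y = Pmat n s \<Longrightarrow> (\<And>i. i \<in> {1..n} \<Longrightarrow> c i \<noteq> 0) \<Longrightarrow>
   (X, perm_cell n s c, Y) \<in> tg_hom EM X Y"
  by (simp add: EM_hom inv_twocell_perm_cellI)

lemma hom_EM_eq_perm_cell:
  assumes "f \<in> tg_hom EM X Y" "s permutes {1..n}" "fst X = Pmat n s" "fst Y = Pmat n s"
  shows "f = (X, perm_cell n s (perm_cell_coeffs n s (fst (snd f))), Y)
    \<and> perm_cell_coeffs n s (fst (snd f)) \<in> cstar_vecs n"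
  using assms inv_twocell_perm_cell[of s n X Y] unfolding EM_hom by auto

lemma hom_EM_perm_cellE:
  assumes "f \<in> tg_hom EM X Y" "s permutes {1..n}" "fst X = Pmat n s" "fst Y = Pmat n s"
  obtains c where "c \<in> cstar_vecs n" "f = (X, perm_cell n s c, Y)"
  using hom_EM_eq_perm_cell[OF assms] by blast

lemma comp_perm_cell:
  "tg_comp EM (Y, perm_cell n s a, Z) (X, perm_cell n s b, Y') = (X, perm_cell n s (\<lambda>i. a i * b i), Z)"
  by (simp add: EM_comp vcomp2_perm_cell)

lemma id_EM_Pmat: "fst X = Pmat n s \<Longrightarrow> tg_id EM X = (X, perm_cell n s (\<lambda>_. 1), X)"
  by (simp add: EM_id id2_Pmat)

lemma iso_mor_perm_cell:
  assumes X: "fst X = Pmat n s" and Y: "fst Y = Pmat n s" and c: "\<And>i. i \<in> {1..n} \<Longrightarrow> c i \<noteq> 0"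
  shows "iso_mor EM X Y (X, perm_cell n s c, Y)"
proof -
  have "perm_cell n s (\<lambda>i. 1 / c i * c i) = perm_cell n s (\<lambda>_. 1)"
       "perm_cell n s (\<lambda>i. c i * (1 / c i)) = perm_cell n s (\<lambda>_. 1)"
    by (auto intro: perm_cell_cong simp: c)
  then show ?thesis
    unfolding iso_mor_def using X Y c
    by (auto simp: comp_perm_cell id_EM_Pmat intro!: perm_cell_in_hom
        bexI[of _ "(Y, perm_cell n s (\<lambda>i. 1 / c i), X)"])
qed

lemma iso_obj_EM_iff:
  assumes s: "s permutes {1..n}" and t: "t permutes {1..n}"
    and X: "fst X = Pmat n s" and Y: "fst Y = Pmat n t"
  shows "iso_obj EM X Y \<longleftrightarrow> s = t"
proof
  assume "iso_obj EM X Y"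
  then obtain T where "inv_twocell n X Y T"
    unfolding iso_obj_def iso_mor_def EM_hom by auto
  then show "s = t" by (rule inv_twocell_Pmat_eq[OF s t X Y])
next
  assume "s = t"
  with X Y have "iso_mor EM X Y (X, perm_cell n s (\<lambda>_. 1), Y)"
    by (simp add: iso_mor_perm_cell)
  then show "iso_obj EM X Y"
    unfolding iso_obj_def by blast
qed

lemma invm_perm_cell:
  assumes s: "s permutes {1..n}" and X: "fst X = Pmat n s" and Y: "fst Y = Pmat n s"
    and c: "\<And>i. i \<in> {1..n} \<Longrightarrow> c i \<noteq> 0"
  shows "invm EM X Y (X, perm_cell n s c, Y) = (Y, perm_cell n s (\<lambda>i. 1 / c i), X)"
  unfolding invm_def
proof (rule the_equality)
  have "perm_cell n s (\<lambda>i. 1 / c i * c i) = perm_cell n s (\<lambda>_. 1)"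
       "perm_cell n s (\<lambda>i. c i * (1 / c i)) = perm_cell n s (\<lambda>_. 1)"
    by (auto intro: perm_cell_cong simp: c)
  then show "(Y, perm_cell n s (\<lambda>i. 1 / c i), X) \<in> tg_hom EM Y X \<and>
    tg_comp EM (Y, perm_cell n s (\<lambda>i. 1 / c i), X) (X, perm_cell n s c, Y) = tg_id EM X \<and>
    tg_comp EM (X, perm_cell n s c, Y) (Y, perm_cell n s (\<lambda>i. 1 / c i), X) = tg_id EM Y"
    using X Y c by (simp add: perm_cell_in_hom comp_perm_cell id_EM_Pmat)
next
  fix g
  assume g: "g \<in> tg_hom EM Y X \<and> tg_comp EM g (X, perm_cell n s c, Y) = tg_id EM X \<and>
    tg_comp EM (X, perm_cell n s c, Y) g = tg_id EM Y"
  then obtain d where g_eq: "g = (Y, perm_cell n s d, X)"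
    using hom_EM_perm_cellE[OF _ s Y X] by blast
  with g X have "perm_cell n s (\<lambda>i. d i * c i) = perm_cell n s (\<lambda>_. 1)"
    by (simp add: comp_perm_cell id_EM_Pmat)
  then have "\<forall>i \<in> {1..n}. d i = 1 / c i"
    using c by (auto simp: perm_cell_eq_iff[OF s] field_simps)
  with g_eq show "g = (Y, perm_cell n s (\<lambda>i. 1 / c i), X)"
    by (auto intro: perm_cell_cong)
qed

lemma tensm_perm_cell:
  assumes s: "s permutes {1..n}" and t: "t permutes {1..n}"
    and X: "X \<in> tg_obj EM" "fst X = Pmat n s" and X': "X' \<in> tg_obj EM" "fst X' = Pmat n s"
    and Y: "fst Y = Pmat n t" and Y': "fst Y' = Pmat n t"
  shows "tg_tensm EM (X, perm_cell n s a, X') (Y, perm_cell n t b, Y')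
       = (comp1 n Pm X Y, perm_cell n (s \<circ> t) (\<lambda>k. a k * b (pinv s k)), comp1 n Pm X' Y')"
  using hcomp2_perm_cell[OF s t gauge_of_obj[OF X] gauge_of_obj[OF X'] Y Y'] by (simp add: EM_tensm)

end

locale admissible_equiv_mat = equiv_mat +
  assumes adm: "admissible_P n Pm"
begin

lemma tens_obj:
  assumes "X \<in> tg_obj EM" "fst X = Pmat n s" "s permutes {1..n}"
    and "Y \<in> tg_obj EM" "fst Y = Pmat n t" "t permutes {1..n}"
  shows "comp1 n Pm X Y \<in> tg_obj EM" "fst (comp1 n Pm X Y) = Pmat n (s \<circ> t)"
  using comp1_onemor[OF assms(3,6) adm, of X Y] assms permutes_compose[of t _ s]
  unfolding obj_EM_iff by auto

lemma tensm_E0: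
  assumes "s permutes {1..n}" "t permutes {1..n}"
  shows "tg_tensm EM (E0 n s, perm_cell n s a, E0 n s) (E0 n t, perm_cell n t b, E0 n t)
       = (E0 n (s \<circ> t), perm_cell n (s \<circ> t) (\<lambda>k. a k * b (pinv s k)), E0 n (s \<circ> t))"
  using assms by (simp add: tensm_perm_cell E0_in_obj comp1_E0 adm)

lemma assoc_E0:
  "s permutes {1..n} \<Longrightarrow> t permutes {1..n} \<Longrightarrow> u permutes {1..n} \<Longrightarrow>
   tg_assoc EM (E0 n s) (E0 n t) (E0 n u) = (E0 n (s \<circ> t \<circ> u), perm_cell n (s \<circ> t \<circ> u) (\<lambda>_. 1), E0 n (s \<circ> t \<circ> u))"
  by (simp add: EM_assoc comp1_E0 adm permutes_compose id2_Pmat o_assoc)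

lemma lu_E0: "s permutes {1..n} \<Longrightarrow> tg_lu EM (E0 n s) = (E0 n s, perm_cell n s (\<lambda>_. 1), E0 n s)"
  by (simp add: EM_lu id2_Pmat id1_eq_E0_id comp1_E0 adm permutes_id)

lemma ru_E0: "s permutes {1..n} \<Longrightarrow> tg_ru EM (E0 n s) = (E0 n s, perm_cell n s (\<lambda>_. 1), E0 n s)"
  by (simp add: EM_ru id2_Pmat id1_eq_E0_id comp1_E0 adm permutes_id)

lemma id_E0: "tg_id EM (E0 n s) = (E0 n s, perm_cell n s (\<lambda>_. 1), E0 n s)"
  by (simp add: id_EM_Pmat)

end

section \<open>The equivalence E(n)\<close>

lemma Gsplit_obj: "tg_obj (Gsplit n) = {s. s permutes {1..n}}"
  and Gsplit_hom: "tg_hom (Gsplit n) s t = (if s = t then {(s, l) | l. l \<in> cstar_vecs n} else {})"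
  and Gsplit_comp: "tg_comp (Gsplit n) (s, l') (t, l) = (s, \<lambda>i. l' i * l i)"
  and Gsplit_id: "tg_id (Gsplit n) s = (s, \<lambda>i. 1)"
  and Gsplit_tens: "tg_tens (Gsplit n) s t = s \<circ> t"
  and Gsplit_tensm: "tg_tensm (Gsplit n) (s1, l1) (s2, l2) = (s1 \<circ> s2, \<lambda>i. l1 i * perm_vec s1 l2 i)"
  and Gsplit_unit: "tg_unit (Gsplit n) = id"
  and Gsplit_assoc: "tg_assoc (Gsplit n) a b c = (a \<circ> b \<circ> c, \<lambda>i. 1)"
  and Gsplit_lu: "tg_lu (Gsplit n) a = (a, \<lambda>i. 1)"
  and Gsplit_ru: "tg_ru (Gsplit n) a = (a, \<lambda>i. 1)"
  by (simp_all add: Gsplit_def)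

lemma Gsplit_homE:
  assumes "f \<in> tg_hom (Gsplit n) s t"
  obtains l where "t = s" "f = (s, l)" "l \<in> cstar_vecs n"
  using assms by (auto simp: Gsplit_hom split: if_splits)

lemma E2_eq_perm_cell: "E2 n s t = (E0 n (s \<circ> t), perm_cell n (s \<circ> t) (\<lambda>_. 1), E0 n (s \<circ> t))"
  unfolding E2_def by (simp add: id2_Pmat)

lemma Eu_eq_perm_cell: "Eu n = (E0 n id, perm_cell n id (\<lambda>_. 1), E0 n id)"
  unfolding Eu_def by (simp add: id1_eq_E0_id Pmat_id[symmetric] id2_Pmat)

context admissible_equiv_mat
begin

text \<open>All structure maps of both 2-groups become scalar 2-cells on the objects E0 s,
  so each coherence condition reduces to an identity between products of scalars.\<close>
lemma E_mon_functor: "mon_functor (Gsplit n) EM (E0 n) (E1 n) (E2 n) (Eu n)"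
  unfolding mon_functor_def
proof (intro conjI ballI)
  fix A assume "A \<in> tg_obj (Gsplit n)"
  then show "E0 n A \<in> tg_obj EM" by (simp add: Gsplit_obj E0_in_obj)
next
  fix A B f assume "A \<in> tg_obj (Gsplit n)" "f \<in> tg_hom (Gsplit n) A B"
  then show "E1 n f \<in> tg_hom EM (E0 n A) (E0 n B)"
    by (auto elim!: Gsplit_homE simp: E1_eq_perm_cell cstar_vecs_nonzero intro!: perm_cell_in_hom)
next
  fix A B C f g assume "f \<in> tg_hom (Gsplit n) A B" "g \<in> tg_hom (Gsplit n) B C"
  then show "E1 n (tg_comp (Gsplit n) g f) = tg_comp EM (E1 n g) (E1 n f)"
    by (auto elim!: Gsplit_homE simp: Gsplit_comp E1_eq_perm_cell comp_perm_cell)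
next
  fix A assume "A \<in> tg_obj (Gsplit n)"
  then show "E1 n (tg_id (Gsplit n) A) = tg_id EM (E0 n A)"
    by (simp add: Gsplit_id E1_eq_perm_cell id_E0)
next
  fix A B assume "A \<in> tg_obj (Gsplit n)" "B \<in> tg_obj (Gsplit n)"
  then show "iso_mor EM (tg_tens EM (E0 n A) (E0 n B)) (E0 n (tg_tens (Gsplit n) A B)) (E2 n A B)"
    by (simp add: Gsplit_obj Gsplit_tens EM_tens comp1_E0 adm E2_eq_perm_cell iso_mor_perm_cell)
next
  show "iso_mor EM (tg_unit EM) (E0 n (tg_unit (Gsplit n))) (Eu n)"
    by (simp add: EM_unit Gsplit_unit Eu_eq_perm_cell id1_eq_E0_id iso_mor_perm_cell)
next
  fix A A' B B' f g
  assume "A \<in> tg_obj (Gsplit n)" "B \<in> tg_obj (Gsplit n)"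
    and "f \<in> tg_hom (Gsplit n) A A'" "g \<in> tg_hom (Gsplit n) B B'"
  then show "tg_comp EM (E2 n A' B') (tg_tensm EM (E1 n f) (E1 n g))
           = tg_comp EM (E1 n (tg_tensm (Gsplit n) f g)) (E2 n A B)"
    by (auto elim!: Gsplit_homE simp: Gsplit_obj Gsplit_tensm E1_eq_perm_cell E2_eq_perm_cell
        tensm_E0 comp_perm_cell perm_vec_def)
next
  fix A B C assume "A \<in> tg_obj (Gsplit n)" "B \<in> tg_obj (Gsplit n)" "C \<in> tg_obj (Gsplit n)"
  then show "tg_comp EM (E1 n (tg_assoc (Gsplit n) A B C))
          (tg_comp EM (E2 n (tg_tens (Gsplit n) A B) C) (tg_tensm EM (E2 n A B) (tg_id EM (E0 n C))))
      = tg_comp EM (E2 n A (tg_tens (Gsplit n) B C))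
          (tg_comp EM (tg_tensm EM (tg_id EM (E0 n A)) (E2 n B C)) (tg_assoc EM (E0 n A) (E0 n B) (E0 n C)))"
    by (simp add: Gsplit_obj Gsplit_assoc Gsplit_tens E1_eq_perm_cell E2_eq_perm_cell id_E0
        tensm_E0 assoc_E0 comp_perm_cell permutes_compose o_assoc)
next
  fix A assume "A \<in> tg_obj (Gsplit n)"
  then show "tg_comp EM (E1 n (tg_lu (Gsplit n) A))
          (tg_comp EM (E2 n (tg_unit (Gsplit n)) A) (tg_tensm EM (Eu n) (tg_id EM (E0 n A))))
      = tg_lu EM (E0 n A)"
    by (simp add: Gsplit_obj Gsplit_lu Gsplit_unit E1_eq_perm_cell E2_eq_perm_cell Eu_eq_perm_cell
        id_E0 tensm_E0 lu_E0 comp_perm_cell permutes_id)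
next
  fix A assume "A \<in> tg_obj (Gsplit n)"
  then show "tg_comp EM (E1 n (tg_ru (Gsplit n) A))
          (tg_comp EM (E2 n A (tg_unit (Gsplit n))) (tg_tensm EM (tg_id EM (E0 n A)) (Eu n)))
      = tg_ru EM (E0 n A)"
    by (simp add: Gsplit_obj Gsplit_ru Gsplit_unit E1_eq_perm_cell E2_eq_perm_cell Eu_eq_perm_cell
        id_E0 tensm_E0 ru_E0 comp_perm_cell permutes_id)
qed

lemma E_mon_equiv: "mon_equiv (Gsplit n) EM (E0 n) (E1 n) (E2 n) (Eu n)"
  unfolding mon_equiv_def
proof (intro conjI ballI impI E_mon_functor)
  fix B assume "B \<in> tg_obj EM"
  then obtain s where "s permutes {1..n}" "fst B = Pmat n s"
    by (rule obj_EME)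
  then show "\<exists>A \<in> tg_obj (Gsplit n). iso_obj EM (E0 n A) B"
    by (auto simp: Gsplit_obj iso_obj_EM_iff)
next
  fix A B g assume A: "A \<in> tg_obj (Gsplit n)" and B: "B \<in> tg_obj (Gsplit n)"
    and g: "g \<in> tg_hom EM (E0 n A) (E0 n B)"
  have a: "A permutes {1..n}" and b: "B permutes {1..n}"
    using A B by (simp_all add: Gsplit_obj)
  obtain T where "inv_twocell n (E0 n A) (E0 n B) T"
    using g by (auto simp: EM_hom)
  then have "A = B"
    by (rule inv_twocell_Pmat_eq[OF a b fst_E0 fst_E0])
  with g obtain c where "c \<in> cstar_vecs n" "g = (E0 n A, perm_cell n A c, E0 n A)"
    using hom_EM_perm_cellE[OF _ a fst_E0 fst_E0] by blast
  then show "\<exists>f \<in> tg_hom (Gsplit n) A B. E1 n f = g"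
    using \<open>A = B\<close> by (auto simp: Gsplit_hom E1_eq_perm_cell)
next
  fix A B f f' assume "A \<in> tg_obj (Gsplit n)"
    and "f \<in> tg_hom (Gsplit n) A B" "f' \<in> tg_hom (Gsplit n) A B" "E1 n f = E1 n f'"
  then show "f = f'"
    by (auto elim!: Gsplit_homE intro: cstar_vecs_eqI
        simp: Gsplit_obj E1_eq_perm_cell perm_cell_eq_iff)
qed

end

section \<open>The homotopy groups and the action\<close>

context equiv_mat
begin

definition perm_class :: "(nat \<Rightarrow> nat) \<Rightarrow> onemor set" where
  "perm_class s = {A \<in> tg_obj EM. fst A = Pmat n s}"

definition class_perm :: "onemor set \<Rightarrow> nat \<Rightarrow> nat" where
  "class_perm X = (SOME s. s permutes {1..n} \<and> X = perm_class s)"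

lemma isoclass_eq_perm_class:
  assumes A: "A \<in> tg_obj EM" and s: "s permutes {1..n}" and fA: "fst A = Pmat n s"
  shows "isoclass EM A = perm_class s"
proof (intro equalityI subsetI)
  fix B assume "B \<in> isoclass EM A"
  then have B: "B \<in> tg_obj EM" and AB: "iso_obj EM A B"
    unfolding isoclass_def isorel_def by auto
  obtain t where "t permutes {1..n}" "fst B = Pmat n t"
    using B by (rule obj_EME)
  with AB B show "B \<in> perm_class s"
    unfolding perm_class_def using iso_obj_EM_iff[OF s _ fA] by auto
next
  fix B assume "B \<in> perm_class s"
  then show "B \<in> isoclass EM A"
    unfolding perm_class_def isoclass_def isorel_def using A iso_obj_EM_iff[OF s s fA] by auto
qed

lemma E0_in_perm_class: "s permutes {1..n} \<Longrightarrow> E0 n s \<in> perm_class s"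
  unfolding perm_class_def by (simp add: E0_in_obj)

lemma perm_class_inject: "s permutes {1..n} \<Longrightarrow> t permutes {1..n} \<Longrightarrow> perm_class s = perm_class t \<longleftrightarrow> s = t"
  using E0_in_perm_class[of s] Pmat_inject[of s n t] unfolding perm_class_def by auto

lemma carrier_pi0: "carrier (pi0 EM) = perm_class ` {s. s permutes {1..n}}"
proof -
  have "carrier (pi0 EM) = isoclass EM ` tg_obj EM"
    unfolding pi0_def quotient_def isoclass_def by auto
  also have "\<dots> = perm_class ` {s. s permutes {1..n}}"
  proof (intro equalityI subsetI)
    fix X assume "X \<in> isoclass EM ` tg_obj EM"
    then obtain A where A: "A \<in> tg_obj EM" and X: "X = isoclass EM A" by blast
    obtain s where "s permutes {1..n}" "fst A = Pmat n s"
      using A by (rule obj_EME)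
    with A X show "X \<in> perm_class ` {s. s permutes {1..n}}"
      using isoclass_eq_perm_class by blast
  next
    fix X assume "X \<in> perm_class ` {s. s permutes {1..n}}"
    then obtain s where s: "s permutes {1..n}" and X: "X = perm_class s" by blast
    then show "X \<in> isoclass EM ` tg_obj EM"
      using isoclass_eq_perm_class[OF E0_in_obj[OF s] s] E0_in_obj[OF s] by auto
  qed
  finally show ?thesis .
qed

lemma class_perm_perm_class: "s permutes {1..n} \<Longrightarrow> class_perm (perm_class s) = s"
  unfolding class_perm_def by (rule some_equality) (auto simp: perm_class_inject)

lemma pi0_carrierD:
  "X \<in> carrier (pi0 EM) \<Longrightarrow> class_perm X permutes {1..n} \<and> X = perm_class (class_perm X)"
  by (auto simp: carrier_pi0 class_perm_perm_class)

lemma class_perm_isoclass: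
  "A \<in> tg_obj EM \<Longrightarrow> s permutes {1..n} \<Longrightarrow> fst A = Pmat n s \<Longrightarrow> class_perm (isoclass EM A) = s"
  by (simp add: isoclass_eq_perm_class class_perm_perm_class)

definition unit_aut :: "(nat \<Rightarrow> complex) \<Rightarrow> onemor \<times> twocell \<times> onemor" where
  "unit_aut c = (id1 n, perm_cell n id c, id1 n)"

definition unit_aut_coeffs :: "onemor \<times> twocell \<times> onemor \<Rightarrow> nat \<Rightarrow> complex" where
  "unit_aut_coeffs u = perm_cell_coeffs n id (fst (snd u))"

lemma fst_id1: "fst (id1 n) = Pmat n id"
  by (simp add: id1_eq_E0_id)

lemma carrier_pi1: "carrier (pi1 EM) = unit_aut ` cstar_vecs n"
proof (intro equalityI subsetI)
  fix u assume "u \<in> carrier (pi1 EM)"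
  then show "u \<in> unit_aut ` cstar_vecs n"
    unfolding pi1_def EM_unit unit_aut_def
    by (auto elim!: hom_EM_perm_cellE[OF _ permutes_id fst_id1 fst_id1])
next
  fix u assume "u \<in> unit_aut ` cstar_vecs n"
  then show "u \<in> carrier (pi1 EM)"
    unfolding pi1_def EM_unit unit_aut_def
    by (auto intro!: perm_cell_in_hom fst_id1 dest: cstar_vecs_nonzero)
qed

lemma unit_aut_coeffs_unit_aut: "c \<in> cstar_vecs n \<Longrightarrow> unit_aut_coeffs (unit_aut c) = c"
  by (simp add: unit_aut_coeffs_def unit_aut_def perm_cell_coeffs_perm_cell permutes_id)

lemma unit_aut_eq_iff: "unit_aut c = unit_aut d \<longleftrightarrow> (\<forall>i \<in> {1..n}. c i = d i)"
  by (simp add: unit_aut_def perm_cell_eq_iff[OF permutes_id])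

lemma pi1_mult_unit_aut: "unit_aut c \<otimes>\<^bsub>pi1 EM\<^esub> unit_aut d = unit_aut (\<lambda>i. c i * d i)"
  by (simp add: pi1_def unit_aut_def comp_perm_cell)

lemma pi1_inv_unit_aut:
  assumes c: "c \<in> cstar_vecs n"
  shows "inv\<^bsub>pi1 EM\<^esub> (unit_aut c) = unit_aut (\<lambda>i. 1 / c i)"
  unfolding m_inv_def
proof (rule the_equality)
  have "\<one>\<^bsub>pi1 EM\<^esub> = unit_aut (\<lambda>_. 1)"
    by (simp add: pi1_def EM_unit unit_aut_def id_EM_Pmat fst_id1)
  then show "unit_aut (\<lambda>i. 1 / c i) \<in> carrier (pi1 EM) \<and>
      unit_aut c \<otimes>\<^bsub>pi1 EM\<^esub> unit_aut (\<lambda>i. 1 / c i) = \<one>\<^bsub>pi1 EM\<^esub> \<and>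
      unit_aut (\<lambda>i. 1 / c i) \<otimes>\<^bsub>pi1 EM\<^esub> unit_aut c = \<one>\<^bsub>pi1 EM\<^esub>"
    using c cstar_vecs_nonzero[OF c]
    by (auto simp: carrier_pi1 cstar_vecs_inverse pi1_mult_unit_aut unit_aut_eq_iff)
next
  fix y assume y: "y \<in> carrier (pi1 EM) \<and> unit_aut c \<otimes>\<^bsub>pi1 EM\<^esub> y = \<one>\<^bsub>pi1 EM\<^esub> \<and>
      y \<otimes>\<^bsub>pi1 EM\<^esub> unit_aut c = \<one>\<^bsub>pi1 EM\<^esub>"
  then obtain d where d: "y = unit_aut d"
    by (auto simp: carrier_pi1)
  have "\<one>\<^bsub>pi1 EM\<^esub> = unit_aut (\<lambda>_. 1)"
    by (simp add: pi1_def EM_unit unit_aut_def id_EM_Pmat fst_id1)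
  with y d have "\<forall>i \<in> {1..n}. c i * d i = 1"
    by (simp add: pi1_mult_unit_aut unit_aut_eq_iff)
  with d cstar_vecs_nonzero[OF c] show "y = unit_aut (\<lambda>i. 1 / c i)"
    by (auto simp: unit_aut_eq_iff field_simps)
qed

lemma unit_aut_coeffs_iso: "unit_aut_coeffs \<in> iso (pi1 EM) (cstar_group n)"
proof -
  have "bij_betw unit_aut_coeffs (carrier (pi1 EM)) (cstar_vecs n)"
    by (rule bij_betw_byWitness[where f' = unit_aut]) (auto simp: carrier_pi1 unit_aut_coeffs_unit_aut)
  then show ?thesis
    unfolding iso_def hom_def
    by (auto simp: carrier_pi1 cstar_group_def bij_betw_def pi1_mult_unit_aut
        unit_aut_coeffs_unit_aut cstar_vecs_mult)
qed

lemma del_unit_aut: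
  assumes A: "A \<in> tg_obj EM" and s: "s permutes {1..n}" and fA: "fst A = Pmat n s"
  shows "del EM A (unit_aut c) = (A, perm_cell n s (perm_vec s c), A)"
proof -
  have fAI: "fst (comp1 n Pm A (id1 n)) = Pmat n s"
    using fA by (simp add: fst_id1 mmul_Pmat[OF s permutes_id])
  have "invm EM (comp1 n Pm A (id1 n)) A (comp1 n Pm A (id1 n), perm_cell n s (\<lambda>_. 1), A)
      = (A, perm_cell n s (\<lambda>_. 1 / 1), comp1 n Pm A (id1 n))"
    by (rule invm_perm_cell[OF s fAI fA]) simp
  then show ?thesis
    by (simp add: del_def EM_ru EM_tens EM_unit fA id2_Pmat id_EM_Pmat unit_aut_def perm_vec_def
        tensm_perm_cell[OF s permutes_id A fA A fA fst_id1 fst_id1] comp_perm_cell)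
qed

lemma gam_unit_aut:
  assumes A: "A \<in> tg_obj EM" and s: "s permutes {1..n}" and fA: "fst A = Pmat n s"
  shows "gam EM A (unit_aut d) = (A, perm_cell n s d, A)"
proof -
  have I: "id1 n \<in> tg_obj EM"
    using E0_in_obj[OF permutes_id] by (simp add: id1_eq_E0_id)
  have fIA: "fst (comp1 n Pm (id1 n) A) = Pmat n s"
    using fA by (simp add: fst_id1 mmul_Pmat[OF permutes_id s])
  have "invm EM (comp1 n Pm (id1 n) A) A (comp1 n Pm (id1 n) A, perm_cell n s (\<lambda>_. 1), A)
      = (A, perm_cell n s (\<lambda>_. 1 / 1), comp1 n Pm (id1 n) A)"
    by (rule invm_perm_cell[OF s fIA fA]) simp
  then show ?thesis
    by (simp add: gam_def EM_lu EM_tens EM_unit fA id2_Pmat id_EM_Pmat unit_aut_def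
        tensm_perm_cell[OF permutes_id s I fst_id1 I fst_id1 fA fA] comp_perm_cell)
qed

lemma gam_inv_perm_cell:
  assumes A: "A \<in> tg_obj EM" and s: "s permutes {1..n}" and fA: "fst A = Pmat n s"
    and w: "w \<in> cstar_vecs n"
  shows "gam_inv EM A (A, perm_cell n s w, A) = unit_aut w"
  unfolding gam_inv_def
proof (rule the_equality)
  show "unit_aut w \<in> tg_hom EM (tg_unit EM) (tg_unit EM) \<and> gam EM A (unit_aut w) = (A, perm_cell n s w, A)"
    using w carrier_pi1 gam_unit_aut[OF A s fA] by (auto simp: pi1_def)
next
  fix u assume u: "u \<in> tg_hom EM (tg_unit EM) (tg_unit EM) \<and> gam EM A u = (A, perm_cell n s w, A)"
  then obtain d where "d \<in> cstar_vecs n" "u = unit_aut d"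
    using carrier_pi1 unfolding pi1_def by auto
  with u w show "u = unit_aut w"
    by (auto simp: gam_unit_aut[OF A s fA] perm_cell_eq_iff[OF s] unit_aut_eq_iff)
qed

lemma act_unit_aut:
  assumes A: "A \<in> tg_obj EM" and s: "s permutes {1..n}" and fA: "fst A = Pmat n s"
    and c: "c \<in> cstar_vecs n"
  shows "act EM A (unit_aut c) = unit_aut (perm_vec s c)"
  unfolding act_def del_unit_aut[OF A s fA]
  by (rule gam_inv_perm_cell[OF A s fA perm_vec_cstar_vecs[OF s c]])

lemma unit_aut_coeffs_act:
  assumes A: "A \<in> tg_obj EM" and u: "u \<in> carrier (pi1 EM)"
  shows "unit_aut_coeffs (act EM A u) = perm_vec (class_perm (isoclass EM A)) (unit_aut_coeffs u)"
proof -
  obtain s where s: "s permutes {1..n}" and fA: "fst A = Pmat n s"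
    using A by (rule obj_EME)
  obtain c where c: "c \<in> cstar_vecs n" and "u = unit_aut c"
    using u by (auto simp: carrier_pi1)
  then show ?thesis
    by (simp add: act_unit_aut[OF A s fA c] class_perm_isoclass[OF A s fA] unit_aut_coeffs_unit_aut
        perm_vec_cstar_vecs[OF s c])
qed

end

context admissible_equiv_mat
begin

lemma pi0_mult_perm_class:
  assumes s: "s permutes {1..n}" and t: "t permutes {1..n}"
  shows "perm_class s \<otimes>\<^bsub>pi0 EM\<^esub> perm_class t = perm_class (s \<circ> t)"
proof -
  have some: "(SOME A. A \<in> perm_class u) \<in> perm_class u" if "u permutes {1..n}" for u
    using E0_in_perm_class[OF that] by (rule someI)
  let ?A = "SOME A. A \<in> perm_class s" and ?B = "SOME B. B \<in> perm_class t"
  have "comp1 n Pm ?A ?B \<in> tg_obj EM" "fst (comp1 n Pm ?A ?B) = Pmat n (s \<circ> t)"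
    using tens_obj[of ?A s ?B t] some[OF s] some[OF t] s t unfolding perm_class_def by auto
  then show ?thesis
    unfolding pi0_def using isoclass_eq_perm_class permutes_compose[OF t s] by (simp add: EM_tens)
qed

lemma class_perm_iso: "class_perm \<in> iso (pi0 EM) (sym_group n)"
proof -
  have "bij_betw class_perm (carrier (pi0 EM)) (carrier (sym_group n))"
    by (rule bij_betw_byWitness[where f' = perm_class])
      (auto simp: carrier_pi0 sym_group_carrier class_perm_perm_class)
  then show ?thesis
    unfolding iso_def hom_def
    by (auto simp: carrier_pi0 sym_group_carrier sym_group_mult class_perm_perm_class
        pi0_mult_perm_class permutes_compose bij_betw_def)
qed

lemma pi0_mult_closed:
  "X \<in> carrier (pi0 EM) \<Longrightarrow> Y \<in> carrier (pi0 EM) \<Longrightarrow>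
   X \<otimes>\<^bsub>pi0 EM\<^esub> Y \<in> carrier (pi0 EM) \<and> class_perm (X \<otimes>\<^bsub>pi0 EM\<^esub> Y) = class_perm X \<circ> class_perm Y"
  by (auto simp: carrier_pi0 pi0_mult_perm_class class_perm_perm_class permutes_compose)

end

section \<open>Triviality of the classifying class\<close>

context admissible_equiv_mat
begin

lemma pi0_member:
  "X \<in> carrier (pi0 EM) \<Longrightarrow> A \<in> X \<Longrightarrow> A \<in> tg_obj EM \<and> fst A = Pmat n (class_perm X)"
  using pi0_carrierD[of X] unfolding perm_class_def by auto

lemma pi0_mult_assoc:
  assumes "X \<in> carrier (pi0 EM)" "Y \<in> carrier (pi0 EM)" "Z \<in> carrier (pi0 EM)"
  shows "X \<otimes>\<^bsub>pi0 EM\<^esub> (Y \<otimes>\<^bsub>pi0 EM\<^esub> Z) = (X \<otimes>\<^bsub>pi0 EM\<^esub> Y) \<otimes>\<^bsub>pi0 EM\<^esub> Z"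
proof -
  obtain a b c where "a permutes {1..n}" "b permutes {1..n}" "c permutes {1..n}"
    and "X = perm_class a" "Y = perm_class b" "Z = perm_class c"
    using assms by (auto simp: carrier_pi0)
  then show ?thesis
    by (simp add: pi0_mult_perm_class permutes_compose o_assoc)
qed

text \<open>Once the structure isomorphisms \<open>phi X Y\<close> are written as scalar 2-cells with
  coefficients \<open>coef X Y\<close>, Sinh's cocycle is the scalar 2-cell of the coefficient ratio
  below, whose form exhibits it as the coboundary of \<open>1 / coef\<close>.\<close>
context
  fixes rep :: "onemor set \<Rightarrow> onemor"
    and phi :: "onemor set \<Rightarrow> onemor set \<Rightarrow> onemor \<times> twocell \<times> onemor"
    and coef :: "onemor set \<Rightarrow> onemor set \<Rightarrow> nat \<Rightarrow> complex"
  assumes rep: "\<And>X. X \<in> carrier (pi0 EM) \<Longrightarrow> rep X \<in> X"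
    and phi: "\<And>X Y. X \<in> carrier (pi0 EM) \<Longrightarrow> Y \<in> carrier (pi0 EM) \<Longrightarrow>
      phi X Y = (comp1 n Pm (rep X) (rep Y), perm_cell n (class_perm X \<circ> class_perm Y) (coef X Y),
                 rep (X \<otimes>\<^bsub>pi0 EM\<^esub> Y))"
    and coef: "\<And>X Y. X \<in> carrier (pi0 EM) \<Longrightarrow> Y \<in> carrier (pi0 EM) \<Longrightarrow> coef X Y \<in> cstar_vecs n"
begin

lemma rep_in_obj: "X \<in> carrier (pi0 EM) \<Longrightarrow> rep X \<in> tg_obj EM"
  and fst_rep: "X \<in> carrier (pi0 EM) \<Longrightarrow> fst (rep X) = Pmat n (class_perm X)"
  using pi0_member rep by blast+

lemma sinh_left_path:
  assumes X: "X \<in> carrier (pi0 EM)" and Y: "Y \<in> carrier (pi0 EM)" and Z: "Z \<in> carrier (pi0 EM)"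
  shows "tg_comp EM (phi (X \<otimes>\<^bsub>pi0 EM\<^esub> Y) Z) (tg_tensm EM (phi X Y) (tg_id EM (rep Z)))
       = (comp1 n Pm (comp1 n Pm (rep X) (rep Y)) (rep Z),
          perm_cell n (class_perm X \<circ> class_perm Y \<circ> class_perm Z)
            (\<lambda>k. coef (X \<otimes>\<^bsub>pi0 EM\<^esub> Y) Z k * coef X Y k),
          rep ((X \<otimes>\<^bsub>pi0 EM\<^esub> Y) \<otimes>\<^bsub>pi0 EM\<^esub> Z))"
proof -
  define a b c where "a = class_perm X" and "b = class_perm Y" and "c = class_perm Z"
  have perms: "a permutes {1..n}" "b permutes {1..n}" "c permutes {1..n}"
    using pi0_carrierD X Y Z unfolding a_def b_def c_def by auto
  have XY: "X \<otimes>\<^bsub>pi0 EM\<^esub> Y \<in> carrier (pi0 EM)" "class_perm (X \<otimes>\<^bsub>pi0 EM\<^esub> Y) = a \<circ> b"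
    using pi0_mult_closed[OF X Y] unfolding a_def b_def by auto
  have RXY: "comp1 n Pm (rep X) (rep Y) \<in> tg_obj EM" "fst (comp1 n Pm (rep X) (rep Y)) = Pmat n (a \<circ> b)"
    using tens_obj[of "rep X" a "rep Y" b] rep_in_obj fst_rep X Y perms unfolding a_def b_def by auto
  have "tg_tensm EM (phi X Y) (tg_id EM (rep Z))
      = (comp1 n Pm (comp1 n Pm (rep X) (rep Y)) (rep Z), perm_cell n (a \<circ> b \<circ> c) (coef X Y),
         comp1 n Pm (rep (X \<otimes>\<^bsub>pi0 EM\<^esub> Y)) (rep Z))"
    using tensm_perm_cell[OF permutes_compose[OF perms(2,1)] perms(3) RXY rep_in_obj[OF XY(1)]
        fst_rep[OF XY(1), unfolded XY(2)] fst_rep[OF Z, folded c_def] fst_rep[OF Z, folded c_def]]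
      phi[OF X Y] id_EM_Pmat[OF fst_rep[OF Z]]
    unfolding a_def b_def c_def by simp
  then show ?thesis
    using phi[OF XY(1) Z] XY(2) unfolding a_def b_def c_def by (simp add: comp_perm_cell)
qed

lemma sinh_right_path:
  assumes X: "X \<in> carrier (pi0 EM)" and Y: "Y \<in> carrier (pi0 EM)" and Z: "Z \<in> carrier (pi0 EM)"
  shows "tg_comp EM (phi X (Y \<otimes>\<^bsub>pi0 EM\<^esub> Z))
           (tg_comp EM (tg_tensm EM (tg_id EM (rep X)) (phi Y Z)) (tg_assoc EM (rep X) (rep Y) (rep Z)))
       = (comp1 n Pm (comp1 n Pm (rep X) (rep Y)) (rep Z),
          perm_cell n (class_perm X \<circ> class_perm Y \<circ> class_perm Z)
            (\<lambda>k. coef X (Y \<otimes>\<^bsub>pi0 EM\<^esub> Z) k * coef Y Z (pinv (class_perm X) k)),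
          rep ((X \<otimes>\<^bsub>pi0 EM\<^esub> Y) \<otimes>\<^bsub>pi0 EM\<^esub> Z))"
proof -
  define a b c where "a = class_perm X" and "b = class_perm Y" and "c = class_perm Z"
  have perms: "a permutes {1..n}" "b permutes {1..n}" "c permutes {1..n}"
    using pi0_carrierD X Y Z unfolding a_def b_def c_def by auto
  have YZ: "Y \<otimes>\<^bsub>pi0 EM\<^esub> Z \<in> carrier (pi0 EM)" "class_perm (Y \<otimes>\<^bsub>pi0 EM\<^esub> Z) = b \<circ> c"
    using pi0_mult_closed[OF Y Z] unfolding b_def c_def by auto
  have RYZ: "fst (comp1 n Pm (rep Y) (rep Z)) = Pmat n (b \<circ> c)"
    using tens_obj[of "rep Y" b "rep Z" c] rep_in_obj fst_rep Y Z perms unfolding b_def c_def by auto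
  have "fst (comp1 n Pm (comp1 n Pm (rep X) (rep Y)) (rep Z)) = Pmat n (a \<circ> b \<circ> c)"
    using fst_rep X Y Z perms unfolding a_def b_def c_def
    by (simp add: mmul_Pmat permutes_compose)
  then have assoc: "tg_assoc EM (rep X) (rep Y) (rep Z) = (comp1 n Pm (comp1 n Pm (rep X) (rep Y)) (rep Z),
      perm_cell n (a \<circ> b \<circ> c) (\<lambda>_. 1), comp1 n Pm (rep X) (comp1 n Pm (rep Y) (rep Z)))"
    by (simp add: EM_assoc id2_Pmat)
  have "tg_tensm EM (tg_id EM (rep X)) (phi Y Z)
      = (comp1 n Pm (rep X) (comp1 n Pm (rep Y) (rep Z)), perm_cell n (a \<circ> b \<circ> c) (\<lambda>k. coef Y Z (pinv a k)),
         comp1 n Pm (rep X) (rep (Y \<otimes>\<^bsub>pi0 EM\<^esub> Z)))"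
    using tensm_perm_cell[OF perms(1) permutes_compose[OF perms(3,2)] rep_in_obj[OF X]
        fst_rep[OF X, folded a_def] rep_in_obj[OF X] fst_rep[OF X, folded a_def] RYZ
        fst_rep[OF YZ(1), unfolded YZ(2)]]
      phi[OF Y Z] id_EM_Pmat[OF fst_rep[OF X]]
    unfolding a_def b_def c_def by (simp add: o_assoc)
  then show ?thesis
    using phi[OF X YZ(1)] YZ(2) assoc pi0_mult_assoc[OF X Y Z]
    unfolding a_def b_def c_def by (simp add: comp_perm_cell o_assoc)
qed

lemma sinh_cocycle_eq:
  assumes X: "X \<in> carrier (pi0 EM)" and Y: "Y \<in> carrier (pi0 EM)" and Z: "Z \<in> carrier (pi0 EM)"
  shows "sinh_cocycle EM rep phi X Y Z = unit_aut (\<lambda>k.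
     coef (X \<otimes>\<^bsub>pi0 EM\<^esub> Y) Z k * coef X Y k
     / (coef X (Y \<otimes>\<^bsub>pi0 EM\<^esub> Z) k * coef Y Z (pinv (class_perm X) k)))"
proof -
  define a where "a = class_perm X"
  define d where "d = a \<circ> class_perm Y \<circ> class_perm Z"
  define XYZ where "XYZ = (X \<otimes>\<^bsub>pi0 EM\<^esub> Y) \<otimes>\<^bsub>pi0 EM\<^esub> Z"
  define q where "q = (\<lambda>k. coef X (Y \<otimes>\<^bsub>pi0 EM\<^esub> Z) k * coef Y Z (pinv a k))"
  define w where "w = (\<lambda>k. coef (X \<otimes>\<^bsub>pi0 EM\<^esub> Y) Z k * coef X Y k / q k)"
  have XY: "X \<otimes>\<^bsub>pi0 EM\<^esub> Y \<in> carrier (pi0 EM)" and YZ: "Y \<otimes>\<^bsub>pi0 EM\<^esub> Z \<in> carrier (pi0 EM)"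
    and XYZ: "XYZ \<in> carrier (pi0 EM)" "class_perm XYZ = d"
    using pi0_mult_closed X Y Z unfolding XYZ_def d_def a_def by auto
  have a: "a permutes {1..n}" and d: "d permutes {1..n}"
    using pi0_carrierD[OF X] pi0_carrierD[OF XYZ(1)] XYZ(2) unfolding a_def by auto
  have src: "fst (comp1 n Pm (comp1 n Pm (rep X) (rep Y)) (rep Z)) = Pmat n d"
    using fst_rep X Y Z pi0_carrierD unfolding d_def a_def by (simp add: mmul_Pmat permutes_compose)
  have outside: "coef U V k = 1" if "U \<in> carrier (pi0 EM)" "V \<in> carrier (pi0 EM)" "k \<notin> {1..n}" for U V k
    using coef[OF that(1,2)] that(3) unfolding cstar_vecs_def by auto
  have q: "q k \<noteq> 0" if "k \<in> {1..n}" for k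
    using that cstar_vecs_nonzero[OF coef] X Y Z YZ permutes_in_image[OF permutes_inv[OF a]]
    unfolding q_def by auto
  have w: "w \<in> cstar_vecs n"
    using q cstar_vecs_nonzero[OF coef] outside XY X Y Z YZ permutes_not_in[OF permutes_inv[OF a]]
    unfolding cstar_vecs_def w_def q_def by auto
  have "sinh_cocycle EM rep phi X Y Z = gam_inv EM (rep XYZ) (rep XYZ, perm_cell n d w, rep XYZ)"
    unfolding sinh_cocycle_def Let_def sinh_left_path[OF X Y Z] sinh_right_path[OF X Y Z]
      pi0_mult_assoc[OF X Y Z] EM_tens
    using invm_perm_cell[OF d src fst_rep[OF XYZ(1), unfolded XYZ(2)], where c = q, OF q]
    by (simp add: XYZ_def d_def a_def q_def w_def comp_perm_cell)
  also have "\<dots> = unit_aut w"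
    by (rule gam_inv_perm_cell[OF rep_in_obj[OF XYZ(1)] d fst_rep[OF XYZ(1), unfolded XYZ(2)] w])
  finally show ?thesis
    by (simp add: w_def q_def a_def)
qed

lemma sinh_coboundary_eq:
  assumes X: "X \<in> carrier (pi0 EM)" and Y: "Y \<in> carrier (pi0 EM)" and Z: "Z \<in> carrier (pi0 EM)"
  defines "h \<equiv> \<lambda>U V. unit_aut (\<lambda>i. 1 / coef U V i)"
  shows "act EM (rep X) (h Y Z) \<otimes>\<^bsub>pi1 EM\<^esub> inv\<^bsub>pi1 EM\<^esub> (h (X \<otimes>\<^bsub>pi0 EM\<^esub> Y) Z)
      \<otimes>\<^bsub>pi1 EM\<^esub> h X (Y \<otimes>\<^bsub>pi0 EM\<^esub> Z) \<otimes>\<^bsub>pi1 EM\<^esub> inv\<^bsub>pi1 EM\<^esub> (h X Y)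
    = unit_aut (\<lambda>k. coef (X \<otimes>\<^bsub>pi0 EM\<^esub> Y) Z k * coef X Y k
        / (coef X (Y \<otimes>\<^bsub>pi0 EM\<^esub> Z) k * coef Y Z (pinv (class_perm X) k)))"
proof -
  define a where "a = class_perm X"
  have a: "a permutes {1..n}"
    using pi0_carrierD[OF X] unfolding a_def by blast
  have XY: "X \<otimes>\<^bsub>pi0 EM\<^esub> Y \<in> carrier (pi0 EM)" and YZ: "Y \<otimes>\<^bsub>pi0 EM\<^esub> Z \<in> carrier (pi0 EM)"
    using pi0_mult_closed X Y Z by auto
  have nz: "coef U V k \<noteq> 0" if "U \<in> carrier (pi0 EM)" "V \<in> carrier (pi0 EM)" "k \<in> {1..n}" for U V k
    using cstar_vecs_nonzero[OF coef[OF that(1,2)] that(3)] .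
  have "act EM (rep X) (h Y Z) = unit_aut (perm_vec a (\<lambda>i. 1 / coef Y Z i))"
    unfolding h_def using act_unit_aut[OF rep_in_obj[OF X] a fst_rep[OF X, folded a_def]]
    by (simp add: coef[OF Y Z] cstar_vecs_inverse)
  then show ?thesis
    using coef X Y Z XY YZ nz permutes_in_image[OF permutes_inv[OF a]] unfolding h_def a_def[symmetric]
    by (simp add: pi1_inv_unit_aut cstar_vecs_inverse pi1_mult_unit_aut unit_aut_eq_iff perm_vec_def)
qed

end

lemma sinh_trivial_EM: "sinh_trivial EM"
  unfolding sinh_trivial_def
proof (intro allI impI)
  fix rep phi
  let ?C = "carrier (pi0 EM)"
  assume "(\<forall>X \<in> ?C. rep X \<in> X) \<and>
    (\<forall>X \<in> ?C. \<forall>Y \<in> ?C. iso_mor EM (tg_tens EM (rep X) (rep Y)) (rep (X \<otimes>\<^bsub>pi0 EM\<^esub> Y)) (phi X Y))"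
  then have rep: "\<And>X. X \<in> ?C \<Longrightarrow> rep X \<in> X"
    and iso: "\<And>X Y. X \<in> ?C \<Longrightarrow> Y \<in> ?C \<Longrightarrow>
      phi X Y \<in> tg_hom EM (comp1 n Pm (rep X) (rep Y)) (rep (X \<otimes>\<^bsub>pi0 EM\<^esub> Y))"
    by (auto simp: iso_mor_def EM_tens)
  define coef where "coef X Y = perm_cell_coeffs n (class_perm X \<circ> class_perm Y) (fst (snd (phi X Y)))" for X Y
  have phi: "phi X Y = (comp1 n Pm (rep X) (rep Y), perm_cell n (class_perm X \<circ> class_perm Y) (coef X Y),
      rep (X \<otimes>\<^bsub>pi0 EM\<^esub> Y)) \<and> coef X Y \<in> cstar_vecs n" if X: "X \<in> ?C" and Y: "Y \<in> ?C" for X Y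
    unfolding coef_def
  proof (rule hom_EM_eq_perm_cell[OF iso[OF X Y]])
    show "class_perm X \<circ> class_perm Y permutes {1..n}"
      using pi0_carrierD X Y permutes_compose by blast
    show "fst (comp1 n Pm (rep X) (rep Y)) = Pmat n (class_perm X \<circ> class_perm Y)"
      using pi0_member[OF X rep[OF X]] pi0_member[OF Y rep[OF Y]] pi0_carrierD X Y
      by (simp add: mmul_Pmat)
    show "fst (rep (X \<otimes>\<^bsub>pi0 EM\<^esub> Y)) = Pmat n (class_perm X \<circ> class_perm Y)"
      using pi0_member[OF _ rep] pi0_mult_closed[OF X Y] by auto
  qed
  show "\<exists>h. (\<forall>X \<in> ?C. \<forall>Y \<in> ?C. h X Y \<in> carrier (pi1 EM)) \<and>
      (\<forall>X \<in> ?C. \<forall>Y \<in> ?C. \<forall>Z \<in> ?C. sinh_cocycle EM rep phi X Y Z =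
         act EM (rep X) (h Y Z) \<otimes>\<^bsub>pi1 EM\<^esub> inv\<^bsub>pi1 EM\<^esub> (h (X \<otimes>\<^bsub>pi0 EM\<^esub> Y) Z)
         \<otimes>\<^bsub>pi1 EM\<^esub> h X (Y \<otimes>\<^bsub>pi0 EM\<^esub> Z) \<otimes>\<^bsub>pi1 EM\<^esub> inv\<^bsub>pi1 EM\<^esub> (h X Y))"
  proof (intro exI[of _ "\<lambda>X Y. unit_aut (\<lambda>i. 1 / coef X Y i)"] conjI ballI)
    fix X Y assume "X \<in> ?C" "Y \<in> ?C"
    then show "unit_aut (\<lambda>i. 1 / coef X Y i) \<in> carrier (pi1 EM)"
      using phi by (simp add: carrier_pi1 cstar_vecs_inverse)
  next
    fix X Y Z assume "X \<in> ?C" "Y \<in> ?C" "Z \<in> ?C"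
    then show "sinh_cocycle EM rep phi X Y Z =
        act EM (rep X) (unit_aut (\<lambda>i. 1 / coef Y Z i))
        \<otimes>\<^bsub>pi1 EM\<^esub> inv\<^bsub>pi1 EM\<^esub> (unit_aut (\<lambda>i. 1 / coef (X \<otimes>\<^bsub>pi0 EM\<^esub> Y) Z i))
        \<otimes>\<^bsub>pi1 EM\<^esub> unit_aut (\<lambda>i. 1 / coef X (Y \<otimes>\<^bsub>pi0 EM\<^esub> Z) i)
        \<otimes>\<^bsub>pi1 EM\<^esub> inv\<^bsub>pi1 EM\<^esub> (unit_aut (\<lambda>i. 1 / coef X Y i))"
      using sinh_cocycle_eq[OF rep, of phi coef] sinh_coboundary_eq[OF rep, of phi coef] phi by simp
  qed
qed

end

theorem mainTheorem6:
  fixes n :: nat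
    and Pm :: "(nat \<Rightarrow> nat) \<Rightarrow> (nat \<Rightarrow> nat \<Rightarrow> nat) \<Rightarrow> (nat \<Rightarrow> nat) \<Rightarrow> complex mat"
  assumes "n \<ge> 1"
    and "admissible_P n Pm"
  shows "pi0 (EquivMat n Pm) \<cong> sym_group n
    \<and> (\<exists>\<alpha> \<beta>. \<alpha> \<in> iso (pi0 (EquivMat n Pm)) (sym_group n)
          \<and> \<beta> \<in> iso (pi1 (EquivMat n Pm)) (cstar_group n)
          \<and> (\<forall>A \<in> tg_obj (EquivMat n Pm). \<forall>u \<in> carrier (pi1 (EquivMat n Pm)).
               \<beta> (act (EquivMat n Pm) A u) = perm_vec (\<alpha> (isoclass (EquivMat n Pm) A)) (\<beta> u)))
    \<and> sinh_trivial (EquivMat n Pm)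
    \<and> (\<exists>F0 F1 F2 Fu. mon_equiv (Gsplit n) (EquivMat n Pm) F0 F1 F2 Fu)
    \<and> mon_equiv (Gsplit n) (EquivMat n Pm) (E0 n) (E1 n) (E2 n) (Eu n)"
proof -
  interpret admissible_equiv_mat n Pm
    by unfold_locales (rule assms(2))
  show ?thesis
    using class_perm_iso unit_aut_coeffs_iso unit_aut_coeffs_act sinh_trivial_EM E_mon_equiv
    unfolding is_iso_def by blast
qed

end
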